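(* Let $n \ge 1$, let $F$ be an $n$-perturbation on $H^2(\mathbb{D})$ and $S_n = M_z + F$. If $\mathcal{M} \subseteq H^2(\mathbb{D})$ is a nonzero closed subspace with $S_n\mathcal{M}\subseteq\mathcal{M}$, then $\dim(\mathcal{M} \ominus S_n \mathcal{M}) = 1$.
   Context: $H^2(\mathbb{D})$ is the Hardy space on the open unit disc and $M_z$ the unilateral shift on it. All operators are bounded. A linear operator $F$ on $H^2(\mathbb{D})$ is an $n$-perturbation if (a) $Fz^m = 0$ for all $m \ge n$; (b) $F(z^m H^2(\mathbb{D})) \subseteq z^{m+1}\mathbb{C}[z]$ for all $m \ge 0$; and (c) $M_z + F$ is left-invertible. *)

theory Defs
  imports "HOL-Analysis.Analysis"
begin

text \<open>The Hardy space H^2(D) is modelled via the canonical unitary identification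
  f = sum a_k z^k  <->  (a_k), i.e. as the space of square-summable complex
  coefficient sequences, with the inner product of H^2.\<close>

definition H2 :: "(nat \<Rightarrow> complex) set" where
  "H2 = {a. summable (\<lambda>k. (cmod (a k))\<^sup>2)}"

definition h2_inner :: "(nat \<Rightarrow> complex) \<Rightarrow> (nat \<Rightarrow> complex) \<Rightarrow> complex" where
  "h2_inner a b = (\<Sum>k. a k * cnj (b k))"

definition h2_norm :: "(nat \<Rightarrow> complex) \<Rightarrow> real" where
  "h2_norm a = sqrt (\<Sum>k. (cmod (a k))\<^sup>2)"

definition zpow :: "nat \<Rightarrow> nat \<Rightarrow> complex" where
  "zpow m = (\<lambda>k. if k = m then 1 else 0)"

definition Mz :: "(nat \<Rightarrow> complex) \<Rightarrow> nat \<Rightarrow> complex" where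
  "Mz a = (\<lambda>k. if k = 0 then 0 else a (k - 1))"

text \<open>Bounded linear operators on H^2 (only their values on H^2 matter).\<close>
definition bounded_op :: "((nat \<Rightarrow> complex) \<Rightarrow> nat \<Rightarrow> complex) \<Rightarrow> bool" where
  "bounded_op T \<longleftrightarrow>
     (\<forall>x\<in>H2. T x \<in> H2) \<and>
     (\<forall>x\<in>H2. \<forall>y\<in>H2. T (\<lambda>k. x k + y k) = (\<lambda>k. T x k + T y k)) \<and>
     (\<forall>c. \<forall>x\<in>H2. T (\<lambda>k. c * x k) = (\<lambda>k. c * T x k)) \<and>
     (\<exists>C. \<forall>x\<in>H2. h2_norm (T x) \<le> C * h2_norm x)"

definition left_invertible :: "((nat \<Rightarrow> complex) \<Rightarrow> nat \<Rightarrow> complex) \<Rightarrow> bool" where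
  "left_invertible T \<longleftrightarrow> (\<exists>L. bounded_op L \<and> (\<forall>x\<in>H2. L (T x) = x))"

text \<open>z^m H^2: elements vanishing below degree m.  z^(m+1) C[z]: polynomials
  vanishing below degree m+1.\<close>
definition zpow_H2 :: "nat \<Rightarrow> (nat \<Rightarrow> complex) set" where
  "zpow_H2 m = {x \<in> H2. \<forall>k<m. x k = 0}"

definition zpow_poly :: "nat \<Rightarrow> (nat \<Rightarrow> complex) set" where
  "zpow_poly m = {x. (\<forall>k<m. x k = 0) \<and> (\<exists>N. \<forall>k\<ge>N. x k = 0)}"

definition n_perturbation :: "nat \<Rightarrow> ((nat \<Rightarrow> complex) \<Rightarrow> nat \<Rightarrow> complex) \<Rightarrow> bool" where
  "n_perturbation n F \<longleftrightarrow>
     bounded_op F \<and>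
     (\<forall>m\<ge>n. F (zpow m) = (\<lambda>_. 0)) \<and>
     (\<forall>m. F ` zpow_H2 m \<subseteq> zpow_poly (m + 1)) \<and>
     left_invertible (\<lambda>x. (\<lambda>k. Mz x k + F x k))"

definition closed_subspace :: "(nat \<Rightarrow> complex) set \<Rightarrow> bool" where
  "closed_subspace M \<longleftrightarrow>
     M \<subseteq> H2 \<and> (\<lambda>_. 0) \<in> M \<and>
     (\<forall>x\<in>M. \<forall>y\<in>M. (\<lambda>k. x k + y k) \<in> M) \<and>
     (\<forall>c. \<forall>x\<in>M. (\<lambda>k. c * x k) \<in> M) \<and>
     (\<forall>s x. (\<forall>j. s j \<in> M) \<and> x \<in> H2 \<and>
        (\<lambda>j. h2_norm (\<lambda>k. s j k - x k)) \<longlonglongrightarrow> 0 \<longrightarrow> x \<in> M)"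

definition orth_diff :: "(nat \<Rightarrow> complex) set \<Rightarrow> (nat \<Rightarrow> complex) set \<Rightarrow> (nat \<Rightarrow> complex) set" where
  "orth_diff M N = {x \<in> M. \<forall>y\<in>N. h2_inner x y = 0}"

definition dim_one :: "(nat \<Rightarrow> complex) set \<Rightarrow> bool" where
  "dim_one V \<longleftrightarrow> (\<exists>e. e \<noteq> (\<lambda>_. 0) \<and> V = {(\<lambda>k. c * e k) | c. True})"

end

theory Submission
  imports Defs
begin

(*
  Write S = M_z + F and W = M \<ominus> S M.  W is nonzero: otherwise M = S M, and since S raises the
  order of vanishing at 0, M would lie in the intersection of all z^k H^2, which is {0}.

  W contains no orthonormal pair u, v.  Since S is injective and W is orthogonal to S M, the
  vectors S^j u, S^j v (j < K) are linearly independent modulo S^K M.  On the other hand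
  M' = M \<inter> z^n H^2 is a closed M_z-invariant subspace on which S acts as M_z.  By the elementary
  half of Beurling's theorem, M' \<ominus> M_z M' has dimension at most one (an orthonormal pair there
  would generate, under the isometry M_z, an orthonormal family violating Bessel's inequality),
  so M' is spanned by K vectors modulo M_z^K M', a subspace of S^K M.  For j \<ge> n the vectors
  S^j u, S^j v lie in M', and K = 2n + 1 produces 2(n + 1) > K vectors that are independent
  modulo S^K M, a contradiction.
*)

section \<open>The Hilbert space H2\<close>

definition h2_sqnorm :: "(nat \<Rightarrow> complex) \<Rightarrow> real" where
  "h2_sqnorm x = (\<Sum>k. (cmod (x k))\<^sup>2)"

abbreviation h2_dist :: "(nat \<Rightarrow> complex) \<Rightarrow> (nat \<Rightarrow> complex) \<Rightarrow> real" where
  "h2_dist x y \<equiv> h2_norm (\<lambda>k. x k - y k)"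

lemma h2_norm_eq_sqrt: "h2_norm x = sqrt (h2_sqnorm x)"
  by (simp add: h2_norm_def h2_sqnorm_def)

lemma mem_H2_iff: "x \<in> H2 \<longleftrightarrow> summable (\<lambda>k. (cmod (x k))\<^sup>2)"
  by (simp add: H2_def)

lemma cmod_add_power2_le: "(cmod (a + b))\<^sup>2 \<le> 2 * (cmod a)\<^sup>2 + 2 * (cmod b)\<^sup>2"
proof -
  have "(cmod (a + b))\<^sup>2 \<le> (cmod a + cmod b)\<^sup>2"
    by (simp add: power_mono norm_triangle_ineq)
  also have "\<dots> \<le> 2 * (cmod a)\<^sup>2 + 2 * (cmod b)\<^sup>2"
    using zero_le_power2[of "cmod a - cmod b"] unfolding power2_sum power2_diff by linarith
  finally show ?thesis .
qed

lemma H2_add: "x \<in> H2 \<Longrightarrow> y \<in> H2 \<Longrightarrow> (\<lambda>k. x k + y k) \<in> H2"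
  unfolding mem_H2_iff
  by (rule summable_comparison_test'[where g = "\<lambda>k. 2 * (cmod (x k))\<^sup>2 + 2 * (cmod (y k))\<^sup>2"])
     (auto intro: summable_add summable_mult cmod_add_power2_le)

lemma H2_scale: "x \<in> H2 \<Longrightarrow> (\<lambda>k. c * x k) \<in> H2"
  unfolding mem_H2_iff by (simp add: norm_mult power_mult_distrib summable_mult)

lemma H2_diff: "x \<in> H2 \<Longrightarrow> y \<in> H2 \<Longrightarrow> (\<lambda>k. x k - y k) \<in> H2"
  using H2_add[OF _ H2_scale, of x y "-1"] by simp

lemma H2_zero: "(\<lambda>_. 0) \<in> H2"
  unfolding mem_H2_iff by simp

lemma H2_finite_support: "(\<And>k. k \<ge> N \<Longrightarrow> x k = 0) \<Longrightarrow> x \<in> H2"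
  unfolding mem_H2_iff by (rule summable_finite[of "{..<N}"]) auto

lemma zpow_in_H2: "zpow m \<in> H2"
  by (rule H2_finite_support[of "Suc m"]) (auto simp: zpow_def)

lemma H2_sum:
  "finite I \<Longrightarrow> (\<And>i. i \<in> I \<Longrightarrow> y i \<in> H2) \<Longrightarrow> (\<lambda>k. \<Sum>i\<in>I. c i * y i k) \<in> H2"
proof (induction I rule: finite_induct)
  case (insert a I)
  then have "(\<lambda>k. c a * y a k + (\<Sum>i\<in>I. c i * y i k)) \<in> H2"
    by (intro H2_add H2_scale) auto
  with insert show ?case
    by simp
qed (simp add: H2_zero)

lemma h2_inner_summable: "x \<in> H2 \<Longrightarrow> y \<in> H2 \<Longrightarrow> summable (\<lambda>k. x k * cnj (y k))"
proof -
  assume "x \<in> H2" "y \<in> H2"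
  then have "summable (\<lambda>k. (cmod (x k))\<^sup>2 + (cmod (y k))\<^sup>2)"
    by (intro summable_add) (auto simp: mem_H2_iff)
  then show ?thesis
  proof (rule summable_comparison_test')
    fix k
    have "2 * (cmod (x k) * cmod (y k)) \<le> (cmod (x k))\<^sup>2 + (cmod (y k))\<^sup>2"
      using zero_le_power2[of "cmod (x k) - cmod (y k)"] unfolding power2_diff by linarith
    moreover have "0 \<le> cmod (x k) * cmod (y k)"
      by simp
    ultimately show "norm (x k * cnj (y k)) \<le> (cmod (x k))\<^sup>2 + (cmod (y k))\<^sup>2"
      unfolding norm_mult complex_mod_cnj by linarith
  qed
qed

lemma h2_inner_add_left: "x \<in> H2 \<Longrightarrow> y \<in> H2 \<Longrightarrow> z \<in> H2 \<Longrightarrow>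
    h2_inner (\<lambda>k. x k + y k) z = h2_inner x z + h2_inner y z"
  unfolding h2_inner_def by (simp add: distrib_right suminf_add[symmetric] h2_inner_summable)

lemma h2_inner_diff_left: "x \<in> H2 \<Longrightarrow> y \<in> H2 \<Longrightarrow> z \<in> H2 \<Longrightarrow>
    h2_inner (\<lambda>k. x k - y k) z = h2_inner x z - h2_inner y z"
  unfolding h2_inner_def by (simp add: left_diff_distrib suminf_diff[symmetric] h2_inner_summable)

lemma h2_inner_scale_left: "x \<in> H2 \<Longrightarrow> y \<in> H2 \<Longrightarrow>
    h2_inner (\<lambda>k. c * x k) y = c * h2_inner x y"
  unfolding h2_inner_def by (simp add: mult.assoc suminf_mult[symmetric] h2_inner_summable)

lemma h2_inner_commute: "x \<in> H2 \<Longrightarrow> y \<in> H2 \<Longrightarrow> h2_inner y x = cnj (h2_inner x y)"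
proof -
  assume "x \<in> H2" "y \<in> H2"
  then have "(\<lambda>k. cnj (x k * cnj (y k))) sums cnj (h2_inner x y)"
    unfolding h2_inner_def by (intro sums_cnj[THEN iffD2] summable_sums h2_inner_summable)
  then show ?thesis
    unfolding h2_inner_def[of y x] by (simp add: mult.commute sums_iff)
qed

lemma h2_inner_add_right: "x \<in> H2 \<Longrightarrow> y \<in> H2 \<Longrightarrow> z \<in> H2 \<Longrightarrow>
    h2_inner z (\<lambda>k. x k + y k) = h2_inner z x + h2_inner z y"
  by (simp add: h2_inner_commute[of _ z] H2_add h2_inner_add_left)

lemma h2_inner_diff_right: "x \<in> H2 \<Longrightarrow> y \<in> H2 \<Longrightarrow> z \<in> H2 \<Longrightarrow>
    h2_inner z (\<lambda>k. x k - y k) = h2_inner z x - h2_inner z y"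
  by (simp add: h2_inner_commute[of _ z] H2_diff h2_inner_diff_left)

lemma h2_inner_scale_right: "x \<in> H2 \<Longrightarrow> y \<in> H2 \<Longrightarrow>
    h2_inner y (\<lambda>k. c * x k) = cnj c * h2_inner y x"
  by (simp add: h2_inner_commute[of _ y] H2_scale h2_inner_scale_left)

lemma h2_inner_zero_left: "h2_inner (\<lambda>_. 0) x = 0"
  by (simp add: h2_inner_def)

lemma h2_inner_zero_right: "h2_inner x (\<lambda>_. 0) = 0"
  by (simp add: h2_inner_def)

lemma h2_inner_sum_left: "finite I \<Longrightarrow> (\<And>i. i \<in> I \<Longrightarrow> y i \<in> H2) \<Longrightarrow> z \<in> H2 \<Longrightarrow>
    h2_inner (\<lambda>k. \<Sum>i\<in>I. c i * y i k) z = (\<Sum>i\<in>I. c i * h2_inner (y i) z)"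
proof (induction I rule: finite_induct)
  case (insert a I)
  then show ?case
    by (simp add: h2_inner_add_left h2_inner_scale_left H2_scale H2_sum)
qed (simp add: h2_inner_zero_left)

lemma h2_inner_sum_right: "finite I \<Longrightarrow> (\<And>i. i \<in> I \<Longrightarrow> y i \<in> H2) \<Longrightarrow> z \<in> H2 \<Longrightarrow>
    h2_inner z (\<lambda>k. \<Sum>i\<in>I. c i * y i k) = (\<Sum>i\<in>I. cnj (c i) * h2_inner z (y i))"
  by (simp add: h2_inner_commute[of _ z] H2_sum h2_inner_sum_left)

lemma h2_inner_self: "x \<in> H2 \<Longrightarrow> h2_inner x x = of_real (h2_sqnorm x)"
proof -
  assume "x \<in> H2"
  have "(\<lambda>k. x k * cnj (x k)) = (\<lambda>k. of_real ((cmod (x k))\<^sup>2))"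
    by (simp only: complex_norm_square)
  then show ?thesis
    using \<open>x \<in> H2\<close> unfolding h2_inner_def h2_sqnorm_def mem_H2_iff by (simp add: suminf_of_real)
qed

lemma h2_sqnorm_nonneg: "x \<in> H2 \<Longrightarrow> h2_sqnorm x \<ge> 0"
  unfolding h2_sqnorm_def mem_H2_iff by (simp add: suminf_nonneg)

lemma h2_sqnorm_eq_inner: "x \<in> H2 \<Longrightarrow> h2_sqnorm x = Re (h2_inner x x)"
  by (simp add: h2_inner_self)

lemma h2_sqnorm_add: "x \<in> H2 \<Longrightarrow> y \<in> H2 \<Longrightarrow>
    h2_sqnorm (\<lambda>k. x k + y k) = h2_sqnorm x + h2_sqnorm y + 2 * Re (h2_inner x y)"
  by (simp add: h2_sqnorm_eq_inner H2_add h2_inner_add_left h2_inner_add_right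
      h2_inner_commute[of x y])

lemma h2_sqnorm_diff: "x \<in> H2 \<Longrightarrow> y \<in> H2 \<Longrightarrow>
    h2_sqnorm (\<lambda>k. x k - y k) = h2_sqnorm x + h2_sqnorm y - 2 * Re (h2_inner x y)"
  by (simp add: h2_sqnorm_eq_inner H2_diff h2_inner_diff_left h2_inner_diff_right
      h2_inner_commute[of x y])

lemma h2_sqnorm_scale: "x \<in> H2 \<Longrightarrow> h2_sqnorm (\<lambda>k. c * x k) = (cmod c)\<^sup>2 * h2_sqnorm x"
  unfolding h2_sqnorm_def mem_H2_iff by (simp add: norm_mult power_mult_distrib suminf_mult)

lemma h2_sqnorm_eq_0_iff: "x \<in> H2 \<Longrightarrow> h2_sqnorm x = 0 \<longleftrightarrow> x = (\<lambda>_. 0)"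
  unfolding h2_sqnorm_def mem_H2_iff by (simp add: suminf_eq_zero_iff fun_eq_iff)

lemma coeff_power2_le_h2_sqnorm: "x \<in> H2 \<Longrightarrow> (cmod (x k))\<^sup>2 \<le> h2_sqnorm x"
  unfolding h2_sqnorm_def mem_H2_iff using sum_le_suminf[of "\<lambda>k. (cmod (x k))\<^sup>2" "{k}"] by simp

lemma h2_sqnorm_diff_projection:
  assumes "d \<in> H2" "w \<in> H2" "h2_sqnorm w \<noteq> 0"
  shows "h2_sqnorm (\<lambda>k. d k - (h2_inner d w / of_real (h2_sqnorm w)) * w k)
         = h2_sqnorm d - (cmod (h2_inner d w))\<^sup>2 / h2_sqnorm w"
proof -
  define t where "t = h2_inner d w / of_real (h2_sqnorm w)"
  have "cnj t * h2_inner d w = of_real ((cmod (h2_inner d w))\<^sup>2) / of_real (h2_sqnorm w)"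
    unfolding t_def complex_norm_square by (simp add: mult.commute)
  moreover have "(cmod t)\<^sup>2 * h2_sqnorm w = (cmod (h2_inner d w))\<^sup>2 / h2_sqnorm w"
    using assms(3) by (simp add: t_def norm_divide power_divide power2_eq_square)
  ultimately show ?thesis
    using assms by (simp add: h2_sqnorm_diff H2_scale h2_sqnorm_scale h2_inner_scale_right
        flip: t_def)
qed

lemma h2_norm_nonneg: "x \<in> H2 \<Longrightarrow> h2_norm x \<ge> 0"
  by (simp add: h2_norm_eq_sqrt h2_sqnorm_nonneg)

lemma h2_norm_power2: "x \<in> H2 \<Longrightarrow> (h2_norm x)\<^sup>2 = h2_sqnorm x"
  by (simp add: h2_norm_eq_sqrt h2_sqnorm_nonneg)

lemma h2_norm_eq_0_iff: "x \<in> H2 \<Longrightarrow> h2_norm x = 0 \<longleftrightarrow> x = (\<lambda>_. 0)"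
  by (simp add: h2_norm_eq_sqrt h2_sqnorm_eq_0_iff h2_sqnorm_nonneg)

lemma coeff_le_h2_norm: "x \<in> H2 \<Longrightarrow> cmod (x k) \<le> h2_norm x"
  unfolding h2_norm_eq_sqrt
  using coeff_power2_le_h2_sqnorm real_sqrt_le_mono by fastforce

lemma h2_cauchy_schwarz:
  assumes "x \<in> H2" "y \<in> H2"
  shows "cmod (h2_inner x y) \<le> h2_norm x * h2_norm y"
proof (cases "h2_sqnorm y = 0")
  case True
  then show ?thesis
    using assms h2_sqnorm_eq_0_iff h2_norm_nonneg by (simp add: h2_inner_zero_right)
next
  case False
  then have "h2_sqnorm y > 0"
    using h2_sqnorm_nonneg[OF assms(2)] by simp
  moreover have "0 \<le> h2_sqnorm x - (cmod (h2_inner x y))\<^sup>2 / h2_sqnorm y"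
    using h2_sqnorm_nonneg[OF H2_diff[OF assms(1) H2_scale[OF assms(2),
          of "h2_inner x y / of_real (h2_sqnorm y)"]]]
    by (simp only: h2_sqnorm_diff_projection[OF assms False])
  ultimately have "(cmod (h2_inner x y))\<^sup>2 \<le> (h2_norm x * h2_norm y)\<^sup>2"
    using assms by (simp add: power_mult_distrib h2_norm_power2 field_simps)
  then show ?thesis
    by (rule power2_le_imp_le) (simp add: assms h2_norm_nonneg)
qed

lemma h2_norm_triangle:
  assumes "x \<in> H2" "y \<in> H2"
  shows "h2_norm (\<lambda>k. x k + y k) \<le> h2_norm x + h2_norm y"
proof -
  have "Re (h2_inner x y) \<le> h2_norm x * h2_norm y"
    using h2_cauchy_schwarz[OF assms] complex_Re_le_cmod[of "h2_inner x y"] by linarith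
  then have "(h2_norm (\<lambda>k. x k + y k))\<^sup>2 \<le> (h2_norm x + h2_norm y)\<^sup>2"
    using assms by (simp add: h2_norm_power2 H2_add h2_sqnorm_add power2_sum)
  then show ?thesis
    by (rule power2_le_imp_le) (simp add: assms h2_norm_nonneg)
qed

lemma h2_dist_triangle: "x \<in> H2 \<Longrightarrow> y \<in> H2 \<Longrightarrow> z \<in> H2 \<Longrightarrow>
    h2_dist x z \<le> h2_dist x y + h2_dist y z"
  using h2_norm_triangle[of "\<lambda>k. x k - y k" "\<lambda>k. y k - z k"] by (simp add: H2_diff)

lemma h2_dist_commute: "h2_dist x y = h2_dist y x"
  unfolding h2_norm_def by (simp add: norm_minus_commute)

section \<open>Subspaces, completeness and orthogonal projection\<close>

definition csubspace :: "(nat \<Rightarrow> complex) set \<Rightarrow> bool" where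
  "csubspace U \<longleftrightarrow> (\<lambda>_. 0) \<in> U \<and> (\<forall>x\<in>U. \<forall>y\<in>U. (\<lambda>k. x k + y k) \<in> U) \<and>
     (\<forall>c. \<forall>x\<in>U. (\<lambda>k. c * x k) \<in> U)"

lemma csubspace_zero: "csubspace U \<Longrightarrow> (\<lambda>_. 0) \<in> U"
  by (simp add: csubspace_def)

lemma csubspace_add: "csubspace U \<Longrightarrow> x \<in> U \<Longrightarrow> y \<in> U \<Longrightarrow> (\<lambda>k. x k + y k) \<in> U"
  by (simp add: csubspace_def)

lemma csubspace_scale: "csubspace U \<Longrightarrow> x \<in> U \<Longrightarrow> (\<lambda>k. c * x k) \<in> U"
  by (simp add: csubspace_def)

lemma csubspace_diff_scale: "csubspace U \<Longrightarrow> x \<in> U \<Longrightarrow> y \<in> U \<Longrightarrow> (\<lambda>k. x k - c * y k) \<in> U"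
  using csubspace_add[OF _ _ csubspace_scale, of U x y "-c"] by simp

lemma csubspace_sum: "finite I \<Longrightarrow> csubspace U \<Longrightarrow> (\<And>i. i \<in> I \<Longrightarrow> y i \<in> U) \<Longrightarrow>
    (\<lambda>k. \<Sum>i\<in>I. c i * y i k) \<in> U"
proof (induction I rule: finite_induct)
  case (insert a I)
  then have "(\<lambda>k. c a * y a k + (\<Sum>i\<in>I. c i * y i k)) \<in> U"
    by (intro csubspace_add csubspace_scale) auto
  with insert show ?case
    by simp
qed (simp add: csubspace_zero)

lemma closed_subspaceD:
  assumes "closed_subspace N"
  shows "N \<subseteq> H2" "csubspace N"
    "\<And>s x. (\<And>j. s j \<in> N) \<Longrightarrow> x \<in> H2 \<Longrightarrow> (\<lambda>j. h2_dist (s j) x) \<longlonglongrightarrow> 0 \<Longrightarrow> x \<in> N"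
  using assms unfolding closed_subspace_def csubspace_def by blast+

definition h2_Cauchy :: "(nat \<Rightarrow> nat \<Rightarrow> complex) \<Rightarrow> bool" where
  "h2_Cauchy s \<longleftrightarrow> (\<forall>e>0. \<exists>N. \<forall>i\<ge>N. \<forall>j\<ge>N. h2_dist (s i) (s j) < e)"

lemma h2_Cauchy_coeff:
  assumes "\<And>j. s j \<in> H2" "h2_Cauchy s"
  shows "Cauchy (\<lambda>j. s j k)"
proof (rule CauchyI)
  fix e :: real
  assume "e > 0"
  with assms(2) obtain N where N: "\<forall>i\<ge>N. \<forall>j\<ge>N. h2_dist (s i) (s j) < e"
    unfolding h2_Cauchy_def by blast
  have "norm (s i k - s j k) < e" if "i \<ge> N" "j \<ge> N" for i j
    using coeff_le_h2_norm[OF H2_diff[OF assms(1)[of i] assms(1)[of j]], of k] N that by fastforce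
  then show "\<exists>M. \<forall>i\<ge>M. \<forall>j\<ge>M. norm (s i k - s j k) < e"
    by blast
qed

lemma h2_Cauchy_tail_bound:
  assumes s: "\<And>j. s j \<in> H2" "h2_Cauchy s"
    and x: "\<And>k. (\<lambda>j. s j k) \<longlonglongrightarrow> x k" and "e > 0"
  shows "\<exists>N. \<forall>i\<ge>N. (\<lambda>k. s i k - x k) \<in> H2 \<and> h2_sqnorm (\<lambda>k. s i k - x k) \<le> e\<^sup>2"
proof -
  obtain N where N: "\<forall>i\<ge>N. \<forall>j\<ge>N. h2_dist (s i) (s j) < e"
    using s(2) \<open>e > 0\<close> unfolding h2_Cauchy_def by blast
  have "(\<lambda>k. s i k - x k) \<in> H2 \<and> h2_sqnorm (\<lambda>k. s i k - x k) \<le> e\<^sup>2" if "i \<ge> N" for i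
  proof -
    have partial: "(\<Sum>k<K. (cmod (s i k - x k))\<^sup>2) \<le> e\<^sup>2" for K
    proof (rule LIMSEQ_le_const2)
      show "(\<lambda>j. \<Sum>k<K. (cmod (s i k - s j k))\<^sup>2) \<longlonglongrightarrow> (\<Sum>k<K. (cmod (s i k - x k))\<^sup>2)"
        by (intro tendsto_intros x)
      have "(\<Sum>k<K. (cmod (s i k - s j k))\<^sup>2) \<le> e\<^sup>2" if "j \<ge> N" for j
      proof -
        have d: "(\<lambda>k. s i k - s j k) \<in> H2"
          by (intro H2_diff s(1))
        then have "(\<Sum>k<K. (cmod (s i k - s j k))\<^sup>2) \<le> h2_sqnorm (\<lambda>k. s i k - s j k)"
          unfolding h2_sqnorm_def mem_H2_iff by (intro sum_le_suminf) auto
        also have "\<dots> = (h2_dist (s i) (s j))\<^sup>2"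
          using d by (simp add: h2_norm_power2)
        also have "\<dots> \<le> e\<^sup>2"
          using N \<open>i \<ge> N\<close> that d h2_norm_nonneg by (intro power_mono) (auto simp: less_imp_le)
        finally show ?thesis .
      qed
      then show "\<exists>N. \<forall>j\<ge>N. (\<Sum>k<K. (cmod (s i k - s j k))\<^sup>2) \<le> e\<^sup>2"
        by blast
    qed
    then have "summable (\<lambda>k. (cmod (s i k - x k))\<^sup>2)"
      by (intro summableI_nonneg_bounded) auto
    with partial show ?thesis
      unfolding mem_H2_iff h2_sqnorm_def by (auto intro: suminf_le_const)
  qed
  then show ?thesis
    by blast
qed

lemma H2_complete:
  assumes s: "\<And>j. s j \<in> H2" "h2_Cauchy s"
  shows "\<exists>x\<in>H2. (\<lambda>j. h2_dist (s j) x) \<longlonglongrightarrow> 0"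
proof -
  define x where "x k = lim (\<lambda>j. s j k)" for k
  have x: "(\<lambda>j. s j k) \<longlonglongrightarrow> x k" for k
    using h2_Cauchy_coeff[OF s] unfolding x_def by (simp add: Cauchy_convergent_iff convergent_LIMSEQ_iff)
  note tail = h2_Cauchy_tail_bound[OF s x]
  obtain N where "(\<lambda>k. s N k - x k) \<in> H2"
    using tail[of 1] by auto
  then have "(\<lambda>k. s N k - (s N k - x k)) \<in> H2"
    by (rule H2_diff[OF s(1)])
  then have "x \<in> H2"
    by simp
  moreover have "(\<lambda>j. h2_dist (s j) x) \<longlonglongrightarrow> 0"
  proof (rule LIMSEQ_I)
    fix r :: real
    assume "r > 0"
    then obtain N where N: "\<forall>i\<ge>N. (\<lambda>k. s i k - x k) \<in> H2 \<and> h2_sqnorm (\<lambda>k. s i k - x k) \<le> (r/2)\<^sup>2"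
      using tail[of "r/2"] by auto
    have "norm (h2_dist (s i) x - 0) < r" if "i \<ge> N" for i
    proof -
      have "h2_dist (s i) x \<le> sqrt ((r/2)\<^sup>2)"
        unfolding h2_norm_eq_sqrt using N that by (intro real_sqrt_le_mono) auto
      then show ?thesis
        using \<open>r > 0\<close> h2_norm_nonneg N that by simp
    qed
    then show "\<exists>N. \<forall>i\<ge>N. norm (h2_dist (s i) x - 0) < r"
      by blast
  qed
  ultimately show ?thesis
    by blast
qed

lemma h2_parallelogram: "a \<in> H2 \<Longrightarrow> b \<in> H2 \<Longrightarrow>
    h2_sqnorm (\<lambda>k. a k - b k) = 2 * h2_sqnorm a + 2 * h2_sqnorm b - h2_sqnorm (\<lambda>k. a k + b k)"
  by (simp add: h2_sqnorm_add h2_sqnorm_diff)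

lemma h2_sqnorm_diff_le_near_minimum:
  assumes N: "csubspace N" "N \<subseteq> H2" and x: "x \<in> H2" and ab: "a \<in> N" "b \<in> N"
    and D: "\<And>y. y \<in> N \<Longrightarrow> D \<le> h2_sqnorm (\<lambda>k. x k - y k)"
  shows "h2_sqnorm (\<lambda>k. a k - b k) \<le>
    2 * h2_sqnorm (\<lambda>k. x k - a k) + 2 * h2_sqnorm (\<lambda>k. x k - b k) - 4 * D"
proof -
  \<comment> \<open>the midpoint of a and b lies in N, so it is at least as far from x as D allows\<close>
  have mid: "(\<lambda>k. (1/2) * (a k + b k)) \<in> N"
    using ab N(1) by (intro csubspace_scale csubspace_add)
  then have "4 * D \<le> 4 * h2_sqnorm (\<lambda>k. x k - (1/2) * (a k + b k))"
    using D by simp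
  also have "\<dots> = h2_sqnorm (\<lambda>k. 2 * (x k - (1/2) * (a k + b k)))"
    using h2_sqnorm_scale[OF H2_diff[OF x], of "\<lambda>k. (1/2) * (a k + b k)" 2] mid N(2) by auto
  also have "(\<lambda>k. 2 * (x k - (1/2) * (a k + b k))) = (\<lambda>k. (x k - a k) + (x k - b k))"
    by (simp add: fun_eq_iff field_simps)
  finally have "4 * D \<le> h2_sqnorm (\<lambda>k. (x k - a k) + (x k - b k))" .
  moreover have "h2_sqnorm (\<lambda>k. (x k - a k) - (x k - b k)) = 2 * h2_sqnorm (\<lambda>k. x k - a k)
      + 2 * h2_sqnorm (\<lambda>k. x k - b k) - h2_sqnorm (\<lambda>k. (x k - a k) + (x k - b k))"
    using x ab N(2) by (intro h2_parallelogram H2_diff) auto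
  moreover have "h2_sqnorm (\<lambda>k. (x k - a k) - (x k - b k)) = h2_sqnorm (\<lambda>k. a k - b k)"
    unfolding h2_sqnorm_def by (simp add: norm_minus_commute)
  ultimately show ?thesis
    by linarith
qed

lemma minimizing_sequence_h2_Cauchy:
  assumes N: "csubspace N" "N \<subseteq> H2" and x: "x \<in> H2"
    and Y: "\<And>j. Y j \<in> N" "\<And>j. h2_sqnorm (\<lambda>k. x k - Y j k) < D + inverse (real (Suc j))"
    and D: "\<And>y. y \<in> N \<Longrightarrow> D \<le> h2_sqnorm (\<lambda>k. x k - y k)"
  shows "h2_Cauchy Y"
  unfolding h2_Cauchy_def
proof (intro allI impI)
  fix e :: real
  assume "e > 0"
  obtain M :: nat where M: "4 / e\<^sup>2 < real M"
    using reals_Archimedean2 by blast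
  have "h2_dist (Y i) (Y j) < e" if "i \<ge> M" "j \<ge> M" for i j
  proof -
    have "inverse (real (Suc i)) \<le> inverse (real (Suc M))" "inverse (real (Suc j)) \<le> inverse (real (Suc M))"
      using that by (simp_all add: field_simps)
    moreover have "4 * inverse (real (Suc M)) < e\<^sup>2"
      using M \<open>e > 0\<close> by (simp add: field_simps) (smt (verit) zero_less_power)
    ultimately have "h2_sqnorm (\<lambda>k. Y i k - Y j k) < e\<^sup>2"
      using h2_sqnorm_diff_le_near_minimum[OF N x Y(1) Y(1) D, of i j] Y(2)[of i] Y(2)[of j] by linarith
    then show ?thesis
      using \<open>e > 0\<close> real_sqrt_less_mono by (fastforce simp: h2_norm_eq_sqrt)
  qed
  then show "\<exists>M. \<forall>i\<ge>M. \<forall>j\<ge>M. h2_dist (Y i) (Y j) < e"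
    by blast
qed

lemma h2_sqnorm_diff_limit_le:
  assumes "x \<in> H2" "p \<in> H2" "\<And>j. Y j \<in> H2" "D \<ge> 0"
    and Y: "\<And>j. h2_sqnorm (\<lambda>k. x k - Y j k) < D + inverse (real (Suc j))"
    and lim: "(\<lambda>j. h2_dist (Y j) p) \<longlonglongrightarrow> 0"
  shows "h2_sqnorm (\<lambda>k. x k - p k) \<le> D"
proof -
  have "h2_dist x p \<le> sqrt D"
  proof (rule LIMSEQ_le_const)
    have "(\<lambda>j. D + inverse (real (Suc j))) \<longlonglongrightarrow> D + 0"
      by (intro tendsto_intros LIMSEQ_inverse_real_of_nat)
    then show "(\<lambda>j. sqrt (D + inverse (real (Suc j))) + h2_dist (Y j) p) \<longlonglongrightarrow> sqrt D"
      using tendsto_add[OF tendsto_real_sqrt lim] by simp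
    have "h2_dist x p \<le> sqrt (D + inverse (real (Suc j))) + h2_dist (Y j) p" for j
    proof -
      have "h2_dist x (Y j) \<le> sqrt (D + inverse (real (Suc j)))"
        using Y[of j] unfolding h2_norm_eq_sqrt by (simp add: real_sqrt_le_mono less_imp_le)
      then show ?thesis
        using h2_dist_triangle[of x "Y j" p] assms by fastforce
    qed
    then show "\<exists>N. \<forall>j\<ge>N. h2_dist x p \<le> sqrt (D + inverse (real (Suc j))) + h2_dist (Y j) p"
      by blast
  qed
  then show ?thesis
    unfolding h2_norm_eq_sqrt using \<open>D \<ge> 0\<close> by simp
qed

lemma closed_subspace_nearest_point:
  assumes "closed_subspace N" and x: "x \<in> H2"
  shows "\<exists>p\<in>N. \<forall>y\<in>N. h2_sqnorm (\<lambda>k. x k - p k) \<le> h2_sqnorm (\<lambda>k. x k - y k)"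
proof -
  note N = closed_subspaceD[OF assms(1)]
  define f where "f y = h2_sqnorm (\<lambda>k. x k - y k)" for y
  define D where "D = Inf (f ` N)"
  have f_nonneg: "y \<in> N \<Longrightarrow> 0 \<le> f y" for y
    unfolding f_def using N(1) x by (intro h2_sqnorm_nonneg H2_diff) auto
  then have bdd: "bdd_below (f ` N)"
    by (intro bdd_belowI[where m = 0]) auto
  have ne: "f ` N \<noteq> {}"
    using csubspace_zero[OF N(2)] by auto
  have D_le: "y \<in> N \<Longrightarrow> D \<le> f y" for y
    unfolding D_def using bdd by (auto intro: cInf_lower)
  have "D \<ge> 0"
    unfolding D_def using ne f_nonneg by (auto intro: cInf_greatest)
  have "\<exists>y. y \<in> N \<and> f y < D + inverse (real (Suc j))" for j
    using cInf_less_iff[OF ne bdd, of "D + inverse (real (Suc j))"] unfolding D_def by auto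
  then obtain Y where Y: "\<And>j. Y j \<in> N" "\<And>j. f (Y j) < D + inverse (real (Suc j))"
    by metis
  then have "h2_Cauchy Y"
    using N x D_le unfolding f_def by (intro minimizing_sequence_h2_Cauchy[where D = D]) auto
  then obtain p where "p \<in> H2" and p_lim: "(\<lambda>j. h2_dist (Y j) p) \<longlonglongrightarrow> 0"
    using H2_complete[of Y] Y(1) N(1) by blast
  then have "p \<in> N"
    using N(3) Y(1) by blast
  moreover have "f p \<le> D"
    unfolding f_def using h2_sqnorm_diff_limit_le[OF x \<open>p \<in> H2\<close> _ \<open>D \<ge> 0\<close> _ p_lim] Y N(1)
    unfolding f_def by blast
  ultimately show ?thesis
    using D_le unfolding f_def by force
qed

lemma nearest_point_orthogonal:
  assumes N: "csubspace N" "N \<subseteq> H2" and "x \<in> H2" "p \<in> N" "w \<in> N"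
    and min: "\<And>y. y \<in> N \<Longrightarrow> h2_sqnorm (\<lambda>k. x k - p k) \<le> h2_sqnorm (\<lambda>k. x k - y k)"
  shows "h2_inner (\<lambda>k. x k - p k) w = 0"
proof (cases "h2_sqnorm w = 0")
  case True
  then show ?thesis
    using assms h2_sqnorm_eq_0_iff by (auto simp: h2_inner_zero_right)
next
  case False
  define d where "d = (\<lambda>k. x k - p k)"
  define t where "t = h2_inner d w / of_real (h2_sqnorm w)"
  have H: "d \<in> H2" "w \<in> H2"
    using assms unfolding d_def by (auto intro: H2_diff)
  have "(\<lambda>k. p k + t * w k) \<in> N"
    using assms by (intro csubspace_add csubspace_scale)
  then have "h2_sqnorm d \<le> h2_sqnorm (\<lambda>k. d k - t * w k)"
    using min unfolding d_def by (simp add: diff_diff_eq)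
  also have "\<dots> = h2_sqnorm d - (cmod (h2_inner d w))\<^sup>2 / h2_sqnorm w"
    unfolding t_def using h2_sqnorm_diff_projection[OF H False] .
  finally have "(cmod (h2_inner d w))\<^sup>2 / h2_sqnorm w \<le> 0"
    by simp
  moreover have "h2_sqnorm w > 0"
    using False h2_sqnorm_nonneg[OF H(2)] by simp
  ultimately show ?thesis
    unfolding d_def by (simp add: divide_le_0_iff)
qed

lemma closed_subspace_projection:
  assumes "closed_subspace N" "x \<in> H2"
  shows "\<exists>p\<in>N. \<forall>y\<in>N. h2_inner (\<lambda>k. x k - p k) y = 0"
proof -
  note N = closed_subspaceD[OF assms(1)]
  obtain p where "p \<in> N" and "\<forall>y\<in>N. h2_sqnorm (\<lambda>k. x k - p k) \<le> h2_sqnorm (\<lambda>k. x k - y k)"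
    using closed_subspace_nearest_point[OF assms] by blast
  then show ?thesis
    using nearest_point_orthogonal[OF N(2,1) assms(2) \<open>p \<in> N\<close>] by blast
qed

lemma csubspace_orth_diff:
  assumes "csubspace V" "V \<subseteq> H2" "N \<subseteq> H2"
  shows "csubspace (orth_diff V N)"
proof -
  have "(\<lambda>k. x k + y k) \<in> orth_diff V N" "(\<lambda>k. c * x k) \<in> orth_diff V N"
    if "x \<in> orth_diff V N" "y \<in> orth_diff V N" for x y c
    using that assms
    by (auto simp: orth_diff_def csubspace_add csubspace_scale subset_iff
        h2_inner_add_left h2_inner_scale_left)
  then show ?thesis
    using assms(1) unfolding csubspace_def by (auto simp: orth_diff_def h2_inner_zero_left)
qed

lemma orth_diff_decomposition:
  assumes "closed_subspace N" "csubspace V" "V \<subseteq> H2" "N \<subseteq> V" "x \<in> V"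
  shows "\<exists>p\<in>N. (\<lambda>k. x k - p k) \<in> orth_diff V N"
proof -
  obtain p where "p \<in> N" "\<forall>y\<in>N. h2_inner (\<lambda>k. x k - p k) y = 0"
    using closed_subspace_projection[OF assms(1)] assms(3,5) by blast
  moreover have "(\<lambda>k. x k - 1 * p k) \<in> V"
    using assms \<open>p \<in> N\<close> by (intro csubspace_diff_scale) auto
  ultimately show ?thesis
    unfolding orth_diff_def by auto
qed

definition h2_orthonormal_pair :: "(nat \<Rightarrow> complex) \<Rightarrow> (nat \<Rightarrow> complex) \<Rightarrow> bool" where
  "h2_orthonormal_pair u v \<longleftrightarrow> h2_inner u u = 1 \<and> h2_inner v v = 1 \<and> h2_inner u v = 0"

lemma h2_orthonormal_pair_eq_0:
  assumes "h2_orthonormal_pair u v" "u \<in> H2" "v \<in> H2" "(\<lambda>k. a * u k + b * v k) = (\<lambda>_. 0)"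
  shows "a = 0 \<and> b = 0"
proof -
  have "h2_inner (\<lambda>k. a * u k + b * v k) u = a" "h2_inner (\<lambda>k. a * u k + b * v k) v = b"
    using assms(1-3) h2_inner_commute[of u v]
    by (simp_all add: h2_orthonormal_pair_def h2_inner_add_left h2_inner_scale_left H2_scale)
  then show ?thesis
    using assms(4) by (simp add: h2_inner_zero_left)
qed

lemma h2_normalize:
  assumes "x \<in> H2" "x \<noteq> (\<lambda>_. 0)"
  shows "\<exists>c. c \<noteq> 0 \<and> h2_inner (\<lambda>k. c * x k) (\<lambda>k. c * x k) = 1"
proof -
  have pos: "h2_sqnorm x > 0"
    using assms h2_sqnorm_nonneg h2_sqnorm_eq_0_iff by fastforce
  define c where "c = complex_of_real (1 / sqrt (h2_sqnorm x))"
  have "h2_sqnorm (\<lambda>k. c * x k) = 1"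
    using h2_sqnorm_scale[OF assms(1), of c] pos by (simp add: c_def norm_divide power_divide)
  moreover have "c \<noteq> 0"
    using pos by (simp add: c_def)
  ultimately show ?thesis
    using h2_inner_self[OF H2_scale[OF assms(1)], of c] by auto
qed

lemma collinear_if_no_orthonormal_pair:
  assumes W: "csubspace W" "W \<subseteq> H2"
    and no_pair: "\<And>u v. u \<in> W \<Longrightarrow> v \<in> W \<Longrightarrow> \<not> h2_orthonormal_pair u v"
    and f: "f \<in> W" "f \<noteq> (\<lambda>_. 0)" and g: "g \<in> W"
  shows "\<exists>a. g = (\<lambda>k. a * f k)"
proof -
  obtain t where "t \<noteq> 0" and u_unit: "h2_inner (\<lambda>k. t * f k) (\<lambda>k. t * f k) = 1"
    using h2_normalize f W(2) by blast
  define u where "u = (\<lambda>k. t * f k)"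
  define c where "c = h2_inner g u"
  define g' where "g' = (\<lambda>k. g k - c * u k)"
  have "u \<in> W"
    unfolding u_def using W(1) f(1) by (rule csubspace_scale)
  then have "g' \<in> W"
    unfolding g'_def using W(1) g by (intro csubspace_diff_scale)
  then have H: "u \<in> H2" "g' \<in> H2" "g \<in> H2"
    using W(2) g \<open>u \<in> W\<close> by auto
  have g'_u: "h2_inner u g' = 0"
    using H u_unit h2_inner_commute[OF H(2,1)]
    by (simp add: g'_def c_def h2_inner_diff_left h2_inner_scale_left H2_scale flip: u_def)
  show ?thesis
  proof (cases "g' = (\<lambda>_. 0)")
    case True
    then have "g = (\<lambda>k. (c * t) * f k)"
      unfolding g'_def u_def by (simp add: fun_eq_iff)
    then show ?thesis
      by blast
  next
    case False
    then obtain s where "h2_inner (\<lambda>k. s * g' k) (\<lambda>k. s * g' k) = 1"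
      using h2_normalize H(2) by blast
    moreover have "h2_inner u (\<lambda>k. s * g' k) = 0"
      using H g'_u by (simp add: h2_inner_scale_right)
    moreover have "(\<lambda>k. s * g' k) \<in> W"
      using W(1) \<open>g' \<in> W\<close> by (rule csubspace_scale)
    ultimately have "h2_orthonormal_pair u (\<lambda>k. s * g' k)"
      using u_unit unfolding h2_orthonormal_pair_def u_def by simp
    then show ?thesis
      using no_pair \<open>u \<in> W\<close> \<open>(\<lambda>k. s * g' k) \<in> W\<close> by blast
  qed
qed

lemma dim_oneI:
  assumes "csubspace W" "f \<in> W" "f \<noteq> (\<lambda>_. 0)" "\<And>g. g \<in> W \<Longrightarrow> \<exists>a. g = (\<lambda>k. a * f k)"
  shows "dim_one W"
  unfolding dim_one_def using assms csubspace_scale by blast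

section \<open>Linear operators on H2\<close>

definition h2_linear :: "((nat \<Rightarrow> complex) \<Rightarrow> nat \<Rightarrow> complex) \<Rightarrow> bool" where
  "h2_linear T \<longleftrightarrow> (\<forall>x\<in>H2. T x \<in> H2) \<and>
     (\<forall>x\<in>H2. \<forall>y\<in>H2. T (\<lambda>k. x k + y k) = (\<lambda>k. T x k + T y k)) \<and>
     (\<forall>c. \<forall>x\<in>H2. T (\<lambda>k. c * x k) = (\<lambda>k. c * T x k))"

lemma h2_linear_H2: "h2_linear T \<Longrightarrow> x \<in> H2 \<Longrightarrow> T x \<in> H2"
  by (simp add: h2_linear_def)

lemma h2_linear_add: "h2_linear T \<Longrightarrow> x \<in> H2 \<Longrightarrow> y \<in> H2 \<Longrightarrow>
    T (\<lambda>k. x k + y k) = (\<lambda>k. T x k + T y k)"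
  by (simp add: h2_linear_def)

lemma h2_linear_scale: "h2_linear T \<Longrightarrow> x \<in> H2 \<Longrightarrow> T (\<lambda>k. c * x k) = (\<lambda>k. c * T x k)"
  by (simp add: h2_linear_def)

lemma h2_linear_zero: "h2_linear T \<Longrightarrow> T (\<lambda>_. 0) = (\<lambda>_. 0)"
  using h2_linear_scale[of T "\<lambda>_. 0" 0] H2_zero by simp

lemma h2_linear_diff: "h2_linear T \<Longrightarrow> x \<in> H2 \<Longrightarrow> y \<in> H2 \<Longrightarrow>
    T (\<lambda>k. x k - y k) = (\<lambda>k. T x k - T y k)"
  using h2_linear_add[OF _ _ H2_scale, of T x y "-1"] h2_linear_scale[of T y "-1"] by simp

lemma h2_linear_sum: "finite I \<Longrightarrow> h2_linear T \<Longrightarrow> (\<And>i. i \<in> I \<Longrightarrow> y i \<in> H2) \<Longrightarrow>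
    T (\<lambda>k. \<Sum>i\<in>I. c i * y i k) = (\<lambda>k. \<Sum>i\<in>I. c i * T (y i) k)"
proof (induction I rule: finite_induct)
  case (insert a I)
  then have "T (\<lambda>k. c a * y a k + (\<Sum>i\<in>I. c i * y i k))
      = (\<lambda>k. T (\<lambda>k. c a * y a k) k + T (\<lambda>k. \<Sum>i\<in>I. c i * y i k) k)"
    by (intro h2_linear_add H2_scale H2_sum) auto
  with insert show ?case
    by (simp add: h2_linear_scale)
qed (simp add: h2_linear_zero)

lemma h2_linear_funpow: "h2_linear T \<Longrightarrow> h2_linear (T ^^ j)"
  by (induction j) (auto simp: h2_linear_def H2_add H2_scale)

lemma bounded_op_h2_linear: "bounded_op T \<Longrightarrow> h2_linear T"
  by (simp add: bounded_op_def h2_linear_def)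

lemma bounded_op_bound: "bounded_op T \<Longrightarrow> \<exists>C. \<forall>x\<in>H2. h2_norm (T x) \<le> C * h2_norm x"
  by (simp add: bounded_op_def)

lemma csubspace_h2_linear_image:
  assumes "h2_linear T" "csubspace U" "U \<subseteq> H2"
  shows "csubspace (T ` U)"
proof -
  have "(\<lambda>k. T x k + T y k) \<in> T ` U" "(\<lambda>k. c * T x k) \<in> T ` U" if "x \<in> U" "y \<in> U" for x y c
  proof -
    have "T (\<lambda>k. x k + y k) \<in> T ` U" "T (\<lambda>k. c * x k) \<in> T ` U"
      using that assms(2) by (blast intro: csubspace_add csubspace_scale)+
    moreover have "x \<in> H2" "y \<in> H2"
      using that assms(3) by auto
    ultimately show "(\<lambda>k. T x k + T y k) \<in> T ` U" "(\<lambda>k. c * T x k) \<in> T ` U"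
      by (simp_all add: h2_linear_add[OF assms(1)] h2_linear_scale[OF assms(1)])
  qed
  moreover have "(\<lambda>_. 0) \<in> T ` U"
    using h2_linear_zero[OF assms(1)] csubspace_zero[OF assms(2)] by (metis image_eqI)
  ultimately show ?thesis
    unfolding csubspace_def by blast
qed

lemma closed_subspaceI:
  assumes "N \<subseteq> H2" "csubspace N"
    and "\<And>s x. (\<And>j. s j \<in> N) \<Longrightarrow> x \<in> H2 \<Longrightarrow> (\<lambda>j. h2_dist (s j) x) \<longlonglongrightarrow> 0 \<Longrightarrow> x \<in> N"
  shows "closed_subspace N"
  using assms unfolding closed_subspace_def csubspace_def by blast

lemma h2_limit_unique:
  assumes "\<And>j. s j \<in> H2" "a \<in> H2" "b \<in> H2"
    "(\<lambda>j. h2_dist (s j) a) \<longlonglongrightarrow> 0" "(\<lambda>j. h2_dist (s j) b) \<longlonglongrightarrow> 0"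
  shows "a = b"
proof -
  have "h2_dist a b \<le> 0 + 0"
  proof (rule LIMSEQ_le_const)
    show "(\<lambda>j. h2_dist (s j) a + h2_dist (s j) b) \<longlonglongrightarrow> 0 + 0"
      using assms by (intro tendsto_add)
    show "\<exists>N. \<forall>j\<ge>N. h2_dist a b \<le> h2_dist (s j) a + h2_dist (s j) b"
      using h2_dist_triangle[OF assms(2) assms(1) assms(3)] h2_dist_commute[of a] by metis
  qed
  then have "h2_dist a b = 0"
    using h2_norm_nonneg[OF H2_diff[OF assms(2,3)]] by simp
  then show ?thesis
    using h2_norm_eq_0_iff[OF H2_diff[OF assms(2,3)]] by (simp add: fun_eq_iff)
qed

lemma h2_linear_bounded_tendsto:
  assumes T: "h2_linear T" and C: "\<forall>x\<in>H2. h2_norm (T x) \<le> C * h2_norm x"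
    and s: "\<And>j. s j \<in> H2" and "a \<in> H2" and lim: "(\<lambda>j. h2_dist (s j) a) \<longlonglongrightarrow> 0"
  shows "(\<lambda>j. h2_dist (T (s j)) (T a)) \<longlonglongrightarrow> 0"
proof (rule Lim_null_comparison)
  have "h2_dist (T (s j)) (T a) \<le> C * h2_dist (s j) a" for j
    using C H2_diff[OF s \<open>a \<in> H2\<close>] h2_linear_diff[OF T s \<open>a \<in> H2\<close>] by metis
  then show "\<forall>\<^sub>F j in sequentially. norm (h2_dist (T (s j)) (T a)) \<le> C * h2_dist (s j) a"
    using h2_norm_nonneg H2_diff[OF h2_linear_H2[OF T s] h2_linear_H2[OF T \<open>a \<in> H2\<close>]] by simp
  show "(\<lambda>j. C * h2_dist (s j) a) \<longlonglongrightarrow> 0"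
    using tendsto_mult[OF tendsto_const lim, of C] by simp
qed

lemma bounded_below_h2_Cauchy:
  assumes T: "h2_linear T" and D: "\<forall>x\<in>H2. h2_norm x \<le> D * h2_norm (T x)"
    and y: "\<And>j. y j \<in> H2" and "x \<in> H2" and lim: "(\<lambda>j. h2_dist (T (y j)) x) \<longlonglongrightarrow> 0"
  shows "h2_Cauchy y"
  unfolding h2_Cauchy_def
proof (intro allI impI)
  fix e :: real
  assume "e > 0"
  define D' where "D' = max D 1"
  have "D' > 0"
    unfolding D'_def by simp
  have TyH: "T (y j) \<in> H2" for j
    using T y by (rule h2_linear_H2)
  obtain M where M: "\<forall>j\<ge>M. norm (h2_dist (T (y j)) x - 0) < e / (2 * D')"
    using LIMSEQ_D[OF lim, of "e / (2 * D')"] \<open>e > 0\<close> \<open>D' > 0\<close> by auto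
  have "h2_dist (y i) (y j) < e" if "i \<ge> M" "j \<ge> M" for i j
  proof -
    have "h2_dist (y i) (y j) \<le> D * h2_dist (T (y i)) (T (y j))"
      using D H2_diff[OF y y] h2_linear_diff[OF T y y] by metis
    also have "\<dots> \<le> D' * h2_dist (T (y i)) (T (y j))"
      unfolding D'_def using h2_norm_nonneg[OF H2_diff[OF TyH TyH]] by (simp add: mult_right_mono)
    also have "\<dots> \<le> D' * (h2_dist (T (y i)) x + h2_dist (T (y j)) x)"
      using h2_dist_triangle[OF TyH \<open>x \<in> H2\<close> TyH] h2_dist_commute[of x] \<open>D' > 0\<close>
      by (simp add: mult_left_mono)
    also have "\<dots> < D' * (e / (2 * D') + e / (2 * D'))"
      using M that \<open>D' > 0\<close> h2_norm_nonneg[OF H2_diff[OF TyH \<open>x \<in> H2\<close>]]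
      by (intro mult_strict_left_mono add_strict_mono) auto
    also have "\<dots> = e"
      using \<open>D' > 0\<close> by (simp add: field_simps)
    finally show ?thesis .
  qed
  then show "\<exists>M. \<forall>i\<ge>M. \<forall>j\<ge>M. h2_dist (y i) (y j) < e"
    by blast
qed

lemma closed_subspace_image:
  assumes T: "h2_linear T" and C: "\<forall>x\<in>H2. h2_norm (T x) \<le> C * h2_norm x"
    and D: "\<forall>x\<in>H2. h2_norm x \<le> D * h2_norm (T x)"
    and N: "closed_subspace N"
  shows "closed_subspace (T ` N)"
proof (rule closed_subspaceI)
  note N' = closed_subspaceD[OF N]
  show "T ` N \<subseteq> H2"
    using N'(1) h2_linear_H2[OF T] by blast
  show "csubspace (T ` N)"
    using T N'(2,1) by (rule csubspace_h2_linear_image)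
  fix s x
  assume s: "\<And>j. s j \<in> T ` N" and "x \<in> H2" and lim: "(\<lambda>j. h2_dist (s j) x) \<longlonglongrightarrow> 0"
  have "\<forall>j. \<exists>y\<in>N. s j = T y"
    using s by blast
  then obtain y where y: "\<And>j. y j \<in> N" "\<And>j. s j = T (y j)"
    by metis
  then have yH: "y j \<in> H2" for j
    using N'(1) by auto
  have "h2_Cauchy y"
    using bounded_below_h2_Cauchy[OF T D yH \<open>x \<in> H2\<close>] lim y(2) by simp
  then obtain v where "v \<in> H2" and v_lim: "(\<lambda>j. h2_dist (y j) v) \<longlonglongrightarrow> 0"
    using H2_complete yH by blast
  then have "v \<in> N"
    using N'(3) y(1) by blast
  have "(\<lambda>j. h2_dist (s j) (T v)) \<longlonglongrightarrow> 0"
    using h2_linear_bounded_tendsto[OF T C yH \<open>v \<in> H2\<close> v_lim] y(2) by simp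
  then have "x = T v"
    using h2_limit_unique[OF _ \<open>x \<in> H2\<close> h2_linear_H2[OF T \<open>v \<in> H2\<close>] lim] s \<open>T ` N \<subseteq> H2\<close>
    by blast
  then show "x \<in> T ` N"
    using \<open>v \<in> N\<close> by blast
qed

section \<open>The shift and its invariant subspaces\<close>

lemma Mz_0 [simp]: "Mz x 0 = 0"
  by (simp add: Mz_def)

lemma Mz_Suc [simp]: "Mz x (Suc k) = x k"
  by (simp add: Mz_def)

lemma Mz_funpow_apply: "(Mz ^^ j) x l = (if j \<le> l then x (l - j) else 0)"
  by (induction j arbitrary: l) (auto simp: Mz_def)

lemma Mz_H2: "x \<in> H2 \<Longrightarrow> Mz x \<in> H2"
  unfolding mem_H2_iff using summable_Suc_iff[of "\<lambda>k. (cmod (Mz x k))\<^sup>2"] by simp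

lemma h2_inner_Mz: "x \<in> H2 \<Longrightarrow> y \<in> H2 \<Longrightarrow> h2_inner (Mz x) (Mz y) = h2_inner x y"
  unfolding h2_inner_def
  using suminf_split_head[of "\<lambda>k. Mz x k * cnj (Mz y k)"] h2_inner_summable[OF Mz_H2 Mz_H2]
  by simp

lemma h2_norm_Mz: "x \<in> H2 \<Longrightarrow> h2_norm (Mz x) = h2_norm x"
  by (simp add: h2_norm_eq_sqrt h2_sqnorm_eq_inner h2_inner_Mz Mz_H2)

lemma h2_linear_Mz: "h2_linear Mz"
proof -
  have "\<forall>x\<in>H2. Mz x \<in> H2"
    using Mz_H2 by blast
  then show ?thesis
    unfolding h2_linear_def by (auto simp: Mz_def)
qed

lemma Mz_funpow_H2: "x \<in> H2 \<Longrightarrow> (Mz ^^ j) x \<in> H2"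
  by (induction j) (auto simp: Mz_H2)

lemma h2_inner_Mz_funpow: "x \<in> H2 \<Longrightarrow> y \<in> H2 \<Longrightarrow>
    h2_inner ((Mz ^^ j) x) ((Mz ^^ j) y) = h2_inner x y"
  by (induction j) (auto simp: h2_inner_Mz Mz_funpow_H2)

lemma Mz_funpow_invariant: "Mz ` V \<subseteq> V \<Longrightarrow> x \<in> V \<Longrightarrow> (Mz ^^ j) x \<in> V"
  by (induction j) auto

lemma Mz_funpow_partial_mass:
  "(\<Sum>l<j + N. (cmod ((Mz ^^ j) x l))\<^sup>2) = (\<Sum>l<N. (cmod (x l))\<^sup>2)"
proof -
  have "(\<Sum>l<j + N. (cmod ((Mz ^^ j) x l))\<^sup>2) = (\<Sum>l\<in>{j..<j + N}. (cmod ((Mz ^^ j) x l))\<^sup>2)"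
    by (rule sum.mono_neutral_right) (auto simp: Mz_funpow_apply)
  also have "\<dots> = (\<Sum>l<N. (cmod (x l))\<^sup>2)"
    by (subst sum.atLeastLessThan_shift_0) (simp add: Mz_funpow_apply lessThan_atLeast0)
  finally show ?thesis .
qed

lemma orthonormal_coeff_bessel:
  assumes "finite I" and \<phi>: "\<And>i. i \<in> I \<Longrightarrow> \<phi> i \<in> H2"
    and on: "\<And>i i'. i \<in> I \<Longrightarrow> i' \<in> I \<Longrightarrow> h2_inner (\<phi> i) (\<phi> i') = (if i = i' then 1 else 0)"
  shows "(\<Sum>i\<in>I. (cmod (\<phi> i l))\<^sup>2) \<le> 1"
proof -
  \<comment> \<open>g l = h2_sqnorm g = s, and then s^2 = (cmod (g l))^2 \<le> h2_sqnorm g = s forces s \<le> 1\<close>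
  define s where "s = (\<Sum>i\<in>I. (cmod (\<phi> i l))\<^sup>2)"
  define g where "g = (\<lambda>k. \<Sum>i\<in>I. cnj (\<phi> i l) * \<phi> i k)"
  have "g \<in> H2"
    unfolding g_def using assms by (intro H2_sum)
  have coeffs: "h2_inner (\<phi> i) g = \<phi> i l" if "i \<in> I" for i
  proof -
    have "h2_inner (\<phi> i) g = (\<Sum>i'\<in>I. \<phi> i' l * h2_inner (\<phi> i) (\<phi> i'))"
      unfolding g_def using assms that by (simp add: h2_inner_sum_right)
    also have "\<dots> = (\<Sum>i'\<in>I. if i' = i then \<phi> i l else 0)"
      using on[OF that] by (intro sum.cong) auto
    finally show ?thesis
      using assms(1) that by simp
  qed
  have sq: "cnj (\<phi> i l) * \<phi> i l = of_real ((cmod (\<phi> i l))\<^sup>2)" for i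
    by (simp only: complex_norm_square mult.commute)
  have g_l: "g l = of_real s"
    unfolding g_def s_def by (simp add: sq)
  have "h2_inner g g = (\<Sum>i\<in>I. cnj (\<phi> i l) * h2_inner (\<phi> i) g)"
    using h2_inner_sum_left[of I \<phi> g "\<lambda>i. cnj (\<phi> i l)", OF assms(1) \<phi> \<open>g \<in> H2\<close>, folded g_def] .
  also have "\<dots> = g l"
    using coeffs unfolding g_def by simp
  finally have "h2_sqnorm g = s"
    using h2_inner_self[OF \<open>g \<in> H2\<close>] g_l by simp
  then have "s\<^sup>2 \<le> s"
    using coeff_power2_le_h2_sqnorm[OF \<open>g \<in> H2\<close>, of l] g_l by simp
  moreover have "s \<ge> 0"
    unfolding s_def by (simp add: sum_nonneg)
  ultimately show ?thesis
    unfolding s_def[symmetric] by (cases "s = 0") (auto simp: power2_eq_square)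
qed

lemma orthonormal_partial_mass_card_le:
  assumes "finite I" "\<And>i. i \<in> I \<Longrightarrow> \<phi> i \<in> H2"
    "\<And>i i'. i \<in> I \<Longrightarrow> i' \<in> I \<Longrightarrow> h2_inner (\<phi> i) (\<phi> i') = (if i = i' then 1 else 0)"
    and mass: "\<And>i. i \<in> I \<Longrightarrow> r \<le> (\<Sum>l<L. (cmod (\<phi> i l))\<^sup>2)"
  shows "r * card I \<le> real L"
proof -
  have "r * card I = (\<Sum>i\<in>I. r)"
    by simp
  also have "\<dots> \<le> (\<Sum>i\<in>I. \<Sum>l<L. (cmod (\<phi> i l))\<^sup>2)"
    using mass by (rule sum_mono)
  also have "\<dots> = (\<Sum>l<L. \<Sum>i\<in>I. (cmod (\<phi> i l))\<^sup>2)"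
    by (rule sum.swap)
  also have "\<dots> \<le> (\<Sum>l<L. 1)"
    using orthonormal_coeff_bessel[OF assms(1-3)] by (intro sum_mono)
  finally show ?thesis
    by simp
qed

lemma shift_orthonormal_family:
  assumes V: "V \<subseteq> H2" "Mz ` V \<subseteq> V"
    and e: "\<And>a. e a \<in> orth_diff V (Mz ` V)"
    and on: "\<And>a b. h2_inner (e a) (e b) = (if a = b then 1 else 0)"
  shows "h2_inner ((Mz ^^ i) (e a)) ((Mz ^^ j) (e b)) = (if (i, a) = (j, b) then 1 else 0)"
proof -
  have eV: "e a \<in> V" and eH: "e a \<in> H2" for a
    using e V(1) unfolding orth_diff_def by auto
  have later: "h2_inner ((Mz ^^ i) (e a)) ((Mz ^^ j) (e b)) = 0" if "j < i" for i j a b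
  proof -
    have "(Mz ^^ i) (e a) = (Mz ^^ (j + Suc (i - j - 1))) (e a)"
      using that by simp
    also have "\<dots> = (Mz ^^ j) (Mz ((Mz ^^ (i - j - 1)) (e a)))"
      by (simp only: funpow_add funpow.simps(2) comp_apply)
    moreover have "Mz ((Mz ^^ (i - j - 1)) (e a)) \<in> Mz ` V"
      using Mz_funpow_invariant[OF V(2) eV] by blast
    then have "h2_inner (e b) (Mz ((Mz ^^ (i - j - 1)) (e a))) = 0"
      using e unfolding orth_diff_def by blast
    ultimately show ?thesis
      using eH V by (simp add: h2_inner_Mz_funpow h2_inner_commute[of "e b"] Mz_H2 Mz_funpow_H2)
  qed
  consider "i = j" | "j < i" | "i < j"
    by linarith
  then show ?thesis
  proof cases
    case 1
    then show ?thesis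
      using on eH by (simp add: h2_inner_Mz_funpow)
  next
    case 2
    then show ?thesis
      using later by simp
  next
    case 3
    have "h2_inner ((Mz ^^ i) (e a)) ((Mz ^^ j) (e b)) = cnj (h2_inner ((Mz ^^ j) (e b)) ((Mz ^^ i) (e a)))"
      by (intro h2_inner_commute Mz_funpow_H2 eH)
    then show ?thesis
      using later[OF 3, of b a] 3 by simp
  qed
qed

lemma h2_partial_mass_eventually_gt:
  assumes "x \<in> H2" "r < h2_sqnorm x"
  shows "\<forall>\<^sub>F N in sequentially. r < (\<Sum>l<N. (cmod (x l))\<^sup>2)"
proof (rule order_tendstoD(1)[OF _ assms(2)])
  show "(\<lambda>N. \<Sum>l<N. (cmod (x l))\<^sup>2) \<longlonglongrightarrow> h2_sqnorm x"
    unfolding h2_sqnorm_def using assms(1) by (simp add: mem_H2_iff summable_LIMSEQ)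
qed

lemma shift_wandering_no_orthonormal_pair:
  assumes V: "V \<subseteq> H2" "Mz ` V \<subseteq> V"
    and uv: "u \<in> orth_diff V (Mz ` V)" "v \<in> orth_diff V (Mz ` V)"
  shows "\<not> h2_orthonormal_pair u v"
proof
  assume pair: "h2_orthonormal_pair u v"
  \<comment> \<open>the 2J orthonormal vectors Mz^j u, Mz^j v (j < J) each have mass \<ge> 3/4 in the first J + N0
    coordinates, while Bessel's inequality bounds the total mass there by J + N0\<close>
  define e where "e b = (if b then v else u)" for b
  have e: "e b \<in> orth_diff V (Mz ` V)" "e b \<in> H2" for b
    using uv V(1) unfolding e_def orth_diff_def by auto
  have on: "h2_inner (e a) (e b) = (if a = b then 1 else 0)" for a b
    using pair h2_inner_commute[OF e(2) e(2), of True False]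
    unfolding h2_orthonormal_pair_def e_def by auto
  then have "\<forall>\<^sub>F N in sequentially. 3/4 < (\<Sum>l<N. (cmod (e b l))\<^sup>2)" for b
    using h2_inner_self[OF e(2)] by (intro h2_partial_mass_eventually_gt e) auto
  from eventually_conj[OF this this] obtain N0
    where "3/4 < (\<Sum>l<N0. (cmod (e False l))\<^sup>2)" "3/4 < (\<Sum>l<N0. (cmod (e True l))\<^sup>2)"
    unfolding eventually_sequentially by blast
  then have N0: "3/4 \<le> (\<Sum>l<N0. (cmod (e b l))\<^sup>2)" for b
    by (cases b) auto
  define J where "J = 2 * N0 + 1"
  define \<phi> where "\<phi> p = (Mz ^^ fst p) (e (snd p))" for p
  have "3/4 * card ({..<J} \<times> (UNIV :: bool set)) \<le> real (J + N0)"
  proof (rule orthonormal_partial_mass_card_le)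
    show "\<phi> p \<in> H2" for p
      unfolding \<phi>_def using e(2) by (rule Mz_funpow_H2)
    show "h2_inner (\<phi> p) (\<phi> q) = (if p = q then 1 else 0)" for p q
      unfolding \<phi>_def using shift_orthonormal_family[OF V e(1) on] by (cases p, cases q) auto
    fix p
    assume "p \<in> {..<J} \<times> (UNIV :: bool set)"
    then have "(\<Sum>l<fst p + N0. (cmod (\<phi> p l))\<^sup>2) \<le> (\<Sum>l<J + N0. (cmod (\<phi> p l))\<^sup>2)"
      by (intro sum_mono2) auto
    then show "3/4 \<le> (\<Sum>l<J + N0. (cmod (\<phi> p l))\<^sup>2)"
      using N0[of "snd p"] unfolding \<phi>_def Mz_funpow_partial_mass by linarith
  qed simp
  then show False
    unfolding J_def by (simp add: card_cartesian_product)
qed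

lemma csubspace_span_one_if_no_orthonormal_pair:
  assumes W: "csubspace W" "W \<subseteq> H2"
    and no_pair: "\<And>u v. u \<in> W \<Longrightarrow> v \<in> W \<Longrightarrow> \<not> h2_orthonormal_pair u v"
  shows "\<exists>e\<in>W. \<forall>g\<in>W. \<exists>a. g = (\<lambda>k. a * e k)"
proof (cases "\<exists>f\<in>W. f \<noteq> (\<lambda>_. 0)")
  case True
  then show ?thesis
    using collinear_if_no_orthonormal_pair[OF assms] by blast
next
  case False
  show ?thesis
  proof
    show "(\<lambda>_. 0) \<in> W"
      using W(1) by (rule csubspace_zero)
    show "\<forall>g\<in>W. \<exists>a. g = (\<lambda>k. a * 0)"
      using False by simp
  qed
qed

lemma shift_invariant_codim_le_one:
  assumes V: "closed_subspace V" "Mz ` V \<subseteq> V"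
  shows "\<exists>e\<in>H2. \<forall>x\<in>V. \<exists>a. (\<lambda>k. x k - a * e k) \<in> Mz ` V"
proof -
  note V' = closed_subspaceD[OF V(1)]
  define W where "W = orth_diff V (Mz ` V)"
  have "Mz ` V \<subseteq> H2"
    using V V' by blast
  then have "csubspace W"
    unfolding W_def using V' by (intro csubspace_orth_diff)
  moreover have "W \<subseteq> H2"
    using V'(1) unfolding W_def orth_diff_def by auto
  ultimately obtain e where "e \<in> W" and e: "\<forall>g\<in>W. \<exists>a. g = (\<lambda>k. a * e k)"
    using csubspace_span_one_if_no_orthonormal_pair shift_wandering_no_orthonormal_pair[OF V'(1) V(2)]
    unfolding W_def by metis
  have "closed_subspace (Mz ` V)"
    using closed_subspace_image[OF h2_linear_Mz _ _ V(1), of 1 1] by (simp add: h2_norm_Mz)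
  have "\<exists>a. (\<lambda>k. x k - a * e k) \<in> Mz ` V" if x: "x \<in> V" for x
  proof -
    obtain p where "p \<in> Mz ` V" "(\<lambda>k. x k - p k) \<in> W"
      using orth_diff_decomposition[OF \<open>closed_subspace (Mz ` V)\<close> V'(2,1) V(2) x]
      unfolding W_def by blast
    moreover obtain a where "(\<lambda>k. x k - p k) = (\<lambda>k. a * e k)"
      using e \<open>(\<lambda>k. x k - p k) \<in> W\<close> by blast
    then have "(\<lambda>k. x k - a * e k) = p"
      by (simp add: fun_eq_iff algebra_simps)
    ultimately show ?thesis
      by auto
  qed
  then show ?thesis
    using \<open>e \<in> W\<close> \<open>W \<subseteq> H2\<close> by blast
qed

section \<open>Counting dimensions modulo a subspace\<close>

fun plus_span :: "(nat \<Rightarrow> complex) set \<Rightarrow> (nat \<Rightarrow> complex) list \<Rightarrow> (nat \<Rightarrow> complex) set" where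
  "plus_span U [] = U"
| "plus_span U (w # ws) = {x. \<exists>a. (\<lambda>k. x k - a * w k) \<in> plus_span U ws}"

lemma csubspace_plus_span: "csubspace U \<Longrightarrow> csubspace (plus_span U ws)"
proof (induction ws)
  case (Cons w ws)
  then have IH: "csubspace (plus_span U ws)"
    by simp
  have "(\<lambda>k. x k + y k) \<in> plus_span U (w # ws)" "(\<lambda>k. c * x k) \<in> plus_span U (w # ws)"
    if xy: "x \<in> plus_span U (w # ws)" "y \<in> plus_span U (w # ws)" for x y c
  proof -
    obtain a b where ab: "(\<lambda>k. x k - a * w k) \<in> plus_span U ws" "(\<lambda>k. y k - b * w k) \<in> plus_span U ws"
      using xy by auto
    have "(\<lambda>k. (x k - a * w k) + (y k - b * w k)) \<in> plus_span U ws"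
      using IH ab by (rule csubspace_add)
    then show "(\<lambda>k. x k + y k) \<in> plus_span U (w # ws)"
      by (auto intro!: exI[of _ "a + b"] simp: algebra_simps)
    have "(\<lambda>k. c * (x k - a * w k)) \<in> plus_span U ws"
      using IH ab(1) by (rule csubspace_scale)
    then show "(\<lambda>k. c * x k) \<in> plus_span U (w # ws)"
      by (auto intro!: exI[of _ "c * a"] simp: algebra_simps)
  qed
  moreover have "(\<lambda>_. 0) \<in> plus_span U (w # ws)"
    using csubspace_zero[OF IH] by (auto intro: exI[of _ 0])
  ultimately show ?case
    unfolding csubspace_def by blast
qed simp

lemma plus_span_mono: "U \<subseteq> U' \<Longrightarrow> plus_span U ws \<subseteq> plus_span U' ws"
  by (induction ws) auto

lemma sum_update_pivot:
  fixes y :: "'i \<Rightarrow> 'a::comm_ring"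
  assumes "finite I" "i0 \<in> I"
  shows "(\<Sum>i\<in>I. (c(i0 := - (\<Sum>j\<in>I - {i0}. c j * r j))) i * y i)
    = (\<Sum>i\<in>I - {i0}. c i * (y i - r i * y i0))"
proof -
  have "(\<Sum>i\<in>I - {i0}. (c(i0 := - (\<Sum>j\<in>I - {i0}. c j * r j))) i * y i) = (\<Sum>i\<in>I - {i0}. c i * y i)"
    by (intro sum.cong) auto
  then show ?thesis
    using assms by (simp add: sum.remove right_diff_distrib sum_subtractf sum_distrib_right mult.assoc)
qed

lemma plus_span_dependent:
  assumes "csubspace U"
  shows "finite I \<Longrightarrow> length ws < card I \<Longrightarrow> (\<And>i. i \<in> I \<Longrightarrow> y i \<in> plus_span U ws) \<Longrightarrow>
    \<exists>c. (\<exists>i\<in>I. c i \<noteq> 0) \<and> (\<lambda>k. \<Sum>i\<in>I. c i * y i k) \<in> U"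
proof (induction ws arbitrary: I y)
  case Nil
  then obtain i0 where "i0 \<in> I"
    by fastforce
  have "(\<Sum>i\<in>I. (if i = i0 then 1 else 0) * y i k) = (\<Sum>i\<in>I. if i = i0 then y i k else 0)" for k
    by (rule sum.cong) auto
  then have "(\<lambda>k. \<Sum>i\<in>I. (if i = i0 then 1 else 0) * y i k) = y i0"
    using Nil.prems(1) \<open>i0 \<in> I\<close> by simp
  then show ?case
    using Nil.prems(3) \<open>i0 \<in> I\<close> by (intro exI[of _ "\<lambda>i. if i = i0 then 1 else 0"]) auto
next
  case (Cons w ws)
  obtain a where a: "\<And>i. i \<in> I \<Longrightarrow> (\<lambda>k. y i k - a i * w k) \<in> plus_span U ws"
    using Cons.prems(3) by (simp add: Ball_def) metis
  show ?case
  proof (cases "\<forall>i\<in>I. a i = 0")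
    case True
    then show ?thesis
      using Cons a by simp
  next
    case False
    \<comment> \<open>eliminate w using a vector y i0 in which it occurs\<close>
    then obtain i0 where i0: "i0 \<in> I" "a i0 \<noteq> 0"
      by blast
    define r where "r i = a i / a i0" for i
    have "(\<lambda>k. y i k - r i * y i0 k) \<in> plus_span U ws" if "i \<in> I - {i0}" for i
    proof -
      have "(\<lambda>k. (y i k - a i * w k) - r i * (y i0 k - a i0 * w k)) \<in> plus_span U ws"
        using csubspace_diff_scale[OF csubspace_plus_span[OF assms] a[of i] a[of i0], of "r i"]
          that i0 by auto
      then show ?thesis
        unfolding r_def using i0 by (simp add: algebra_simps)
    qed
    moreover have "finite (I - {i0})" "length ws < card (I - {i0})"
      using Cons.prems i0 by auto
    ultimately obtain c i1 where "i1 \<in> I - {i0}" "c i1 \<noteq> 0"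
      and c: "(\<lambda>k. \<Sum>i\<in>I - {i0}. c i * (y i k - r i * y i0 k)) \<in> U"
      using Cons.IH[of "I - {i0}" "\<lambda>i k. y i k - r i * y i0 k"] by blast
    moreover have "(\<lambda>k. \<Sum>i\<in>I. (c(i0 := - (\<Sum>j\<in>I - {i0}. c j * r j))) i * y i k)
        = (\<lambda>k. \<Sum>i\<in>I - {i0}. c i * (y i k - r i * y i0 k))"
      by (rule ext) (rule sum_update_pivot[OF Cons.prems(1) i0(1)])
    ultimately show ?thesis
      by (intro exI[of _ "c(i0 := - (\<Sum>j\<in>I - {i0}. c j * r j))"]) auto
  qed
qed

lemma h2_linear_plus_span:
  assumes T: "h2_linear T" and "U \<subseteq> H2" "set ws \<subseteq> H2" "x \<in> plus_span U ws"
  shows "x \<in> H2 \<and> T x \<in> plus_span (T ` U) (map T ws)"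
  using assms(3,4)
proof (induction ws arbitrary: x)
  case Nil
  then show ?case
    using \<open>U \<subseteq> H2\<close> by auto
next
  case (Cons w ws)
  then obtain a where a: "(\<lambda>k. x k - a * w k) \<in> plus_span U ws" and "w \<in> H2"
    by auto
  with Cons.IH have IH: "(\<lambda>k. x k - a * w k) \<in> H2" "T (\<lambda>k. x k - a * w k) \<in> plus_span (T ` U) (map T ws)"
    using Cons.prems by auto
  have "(\<lambda>k. (x k - a * w k) + a * w k) \<in> H2"
    using IH(1) \<open>w \<in> H2\<close> by (intro H2_add H2_scale)
  then have "x \<in> H2"
    by simp
  moreover have "T (\<lambda>k. x k - a * w k) = (\<lambda>k. T x k - a * T w k)"
    using h2_linear_diff[OF T \<open>x \<in> H2\<close> H2_scale[OF \<open>w \<in> H2\<close>]] h2_linear_scale[OF T \<open>w \<in> H2\<close>] by simp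
  ultimately show ?case
    using IH by auto
qed

fun shift_orbit :: "(nat \<Rightarrow> complex) \<Rightarrow> nat \<Rightarrow> (nat \<Rightarrow> complex) list" where
  "shift_orbit e 0 = []"
| "shift_orbit e (Suc K) = e # map Mz (shift_orbit e K)"

lemma length_shift_orbit [simp]: "length (shift_orbit e K) = K"
  by (induction K) auto

lemma shift_orbit_H2: "e \<in> H2 \<Longrightarrow> set (shift_orbit e K) \<subseteq> H2"
  by (induction K) (auto simp: Mz_H2)

lemma shift_invariant_subset_plus_span:
  assumes V: "closed_subspace V" "Mz ` V \<subseteq> V" and "e \<in> H2"
    and codim: "\<forall>x\<in>V. \<exists>a. (\<lambda>k. x k - a * e k) \<in> Mz ` V"
  shows "V \<subseteq> plus_span ((Mz ^^ K) ` V) (shift_orbit e K)"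
proof (induction K)
  case (Suc K)
  show ?case
  proof
    fix x
    assume "x \<in> V"
    then obtain a x1 where a: "(\<lambda>k. x k - a * e k) = Mz x1" and "x1 \<in> V"
      using codim by blast
    have "(Mz ^^ K) ` V \<subseteq> H2"
      using closed_subspaceD(1)[OF V(1)] Mz_funpow_H2 by auto
    then have "Mz x1 \<in> plus_span (Mz ` (Mz ^^ K) ` V) (map Mz (shift_orbit e K))"
      using h2_linear_plus_span[OF h2_linear_Mz _ shift_orbit_H2[OF \<open>e \<in> H2\<close>]] Suc \<open>x1 \<in> V\<close>
      by blast
    then have "(\<lambda>k. x k - a * e k) \<in> plus_span ((Mz ^^ Suc K) ` V) (map Mz (shift_orbit e K))"
      using a by (simp add: image_comp)
    then show "x \<in> plus_span ((Mz ^^ Suc K) ` V) (shift_orbit e (Suc K))"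
      by auto
  qed
qed simp

section \<open>Perturbed shifts\<close>

lemma zpow_H2_0: "zpow_H2 0 = H2"
  by (simp add: zpow_H2_def)

lemma zpow_H2_antimono: "j \<le> m \<Longrightarrow> zpow_H2 m \<subseteq> zpow_H2 j"
  by (auto simp: zpow_H2_def)

lemma closed_subspace_zpow_H2: "closed_subspace (zpow_H2 m)"
proof (rule closed_subspaceI)
  show "zpow_H2 m \<subseteq> H2" "csubspace (zpow_H2 m)"
    by (auto simp: zpow_H2_def csubspace_def H2_zero H2_add H2_scale)
  fix s x
  assume s: "\<And>j. s j \<in> zpow_H2 m" and "x \<in> H2" and lim: "(\<lambda>j. h2_dist (s j) x) \<longlonglongrightarrow> 0"
  have "cmod (x k) \<le> 0" if "k < m" for k
  proof (rule LIMSEQ_le_const[OF lim])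
    have "cmod (x k) \<le> h2_dist (s j) x" for j
      using coeff_le_h2_norm[OF H2_diff[OF _ \<open>x \<in> H2\<close>], of "s j" k] s[of j] that
      by (simp add: zpow_H2_def)
    then show "\<exists>N. \<forall>j\<ge>N. cmod (x k) \<le> h2_dist (s j) x"
      by blast
  qed
  then show "x \<in> zpow_H2 m"
    using \<open>x \<in> H2\<close> by (simp add: zpow_H2_def)
qed

lemma closed_subspace_Int: "closed_subspace M \<Longrightarrow> closed_subspace N \<Longrightarrow> closed_subspace (M \<inter> N)"
  unfolding closed_subspace_def by blast

lemma orth_diff_Int_eq_0: "x \<in> orth_diff V N \<Longrightarrow> x \<in> N \<Longrightarrow> x \<in> H2 \<Longrightarrow> x = (\<lambda>_. 0)"
  unfolding orth_diff_def using h2_inner_self h2_sqnorm_eq_0_iff by fastforce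

locale perturbed_shift =
  fixes S :: "(nat \<Rightarrow> complex) \<Rightarrow> nat \<Rightarrow> complex" and n :: nat and C D :: real
  assumes linear: "h2_linear S"
    and bounded: "\<forall>x\<in>H2. h2_norm (S x) \<le> C * h2_norm x"
    and bounded_below: "\<forall>x\<in>H2. h2_norm x \<le> D * h2_norm (S x)"
    and raises_order: "\<And>k x. x \<in> zpow_H2 k \<Longrightarrow> S x \<in> zpow_H2 (Suc k)"
    and shift_on_zpow_H2: "\<And>x. x \<in> zpow_H2 n \<Longrightarrow> S x = Mz x"
begin

lemma S_inj: "x \<in> H2 \<Longrightarrow> y \<in> H2 \<Longrightarrow> S x = S y \<Longrightarrow> x = y"
proof -
  assume H: "x \<in> H2" "y \<in> H2" and "S x = S y"
  then have "S (\<lambda>k. x k - y k) = (\<lambda>_. 0)"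
    using h2_linear_diff[OF linear H] by simp
  have "h2_dist x y \<le> D * h2_norm (S (\<lambda>k. x k - y k))"
    using bounded_below H2_diff[OF H] by blast
  also have "h2_norm (S (\<lambda>k. x k - y k)) = 0"
    using \<open>S (\<lambda>k. x k - y k) = (\<lambda>_. 0)\<close> h2_norm_eq_0_iff[OF H2_zero] by simp
  finally have "h2_dist x y \<le> 0"
    by simp
  then show "x = y"
    using h2_norm_nonneg h2_norm_eq_0_iff H2_diff[OF H] by (fastforce simp: fun_eq_iff)
qed

lemma S_funpow_zpow_H2: "x \<in> zpow_H2 m \<Longrightarrow> (S ^^ j) x \<in> zpow_H2 (m + j)"
  by (induction j) (auto simp: raises_order)

lemma S_funpow_sum_pairs:
  assumes "u \<in> H2" "v \<in> H2"
  shows "(\<lambda>k. \<Sum>p\<in>{m..<K} \<times> UNIV. c p * (S ^^ fst p) (if snd p then v else u) k)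
    = (\<lambda>k. \<Sum>j<K. (S ^^ j) (\<lambda>k. if m \<le> j then c (j, False) * u k + c (j, True) * v k else 0) k)"
proof
  fix k
  have "(S ^^ j) (\<lambda>k. c (j, False) * u k + c (j, True) * v k) k
      = c (j, False) * (S ^^ j) u k + c (j, True) * (S ^^ j) v k" for j
    using h2_linear_add[OF h2_linear_funpow[OF linear] H2_scale[OF assms(1)] H2_scale[OF assms(2)]]
      h2_linear_scale[OF h2_linear_funpow[OF linear] assms(1)]
      h2_linear_scale[OF h2_linear_funpow[OF linear] assms(2)]
    by simp
  moreover have "(S ^^ j) (\<lambda>_. 0) = (\<lambda>_. 0)" for j
    using h2_linear_funpow[OF linear] by (rule h2_linear_zero)
  ultimately have "(\<Sum>j<K. (S ^^ j) (\<lambda>k. if m \<le> j then c (j, False) * u k + c (j, True) * v k else 0) k)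
      = (\<Sum>j\<in>{m..<K}. c (j, False) * (S ^^ j) u k + c (j, True) * (S ^^ j) v k)"
    by (auto simp: if_distrib intro!: sum.mono_neutral_cong_right)
  moreover have "(\<Sum>p\<in>{m..<K} \<times> UNIV. c p * (S ^^ fst p) (if snd p then v else u) k)
      = (\<Sum>j\<in>{m..<K}. \<Sum>b\<in>UNIV. c (j, b) * (S ^^ j) (if b then v else u) k)"
    by (simp only: sum.cartesian_product split_beta' prod.collapse)
  ultimately show "(\<Sum>p\<in>{m..<K} \<times> UNIV. c p * (S ^^ fst p) (if snd p then v else u) k)
      = (\<Sum>j<K. (S ^^ j) (\<lambda>k. if m \<le> j then c (j, False) * u k + c (j, True) * v k else 0) k)"
    by (simp add: UNIV_bool add.commute)
qed

end

locale perturbed_shift_invariant_subspace = perturbed_shift +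
  fixes M :: "(nat \<Rightarrow> complex) set"
  assumes M_closed: "closed_subspace M"
    and M_invariant: "S ` M \<subseteq> M"
    and M_nonzero: "M \<noteq> {\<lambda>_. 0}"
begin

abbreviation wandering :: "(nat \<Rightarrow> complex) set" where
  "wandering \<equiv> orth_diff M (S ` M)"

lemma M_H2: "M \<subseteq> H2" and M_csubspace: "csubspace M"
  using closed_subspaceD[OF M_closed] by auto

lemma S_funpow_M: "x \<in> M \<Longrightarrow> (S ^^ j) x \<in> M"
  by (induction j) (use M_invariant in auto)

lemma csubspace_wandering: "csubspace wandering"
  using M_csubspace M_H2 M_invariant by (intro csubspace_orth_diff) auto

lemma wandering_H2: "wandering \<subseteq> H2"
  using M_H2 unfolding orth_diff_def by auto

lemma SM_neq_M: "S ` M \<noteq> M"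
proof
  assume eq: "S ` M = M"
  have "M \<subseteq> zpow_H2 k" for k
  proof (induction k)
    case (Suc k)
    show ?case
    proof
      fix x
      assume "x \<in> M"
      then obtain y where "y \<in> M" "x = S y"
        using eq by blast
      then show "x \<in> zpow_H2 (Suc k)"
        using Suc raises_order by blast
    qed
  qed (use M_H2 zpow_H2_0 in simp)
  then have "M \<subseteq> {\<lambda>_. 0}"
    by (auto simp: zpow_H2_def fun_eq_iff)
  then show False
    using M_nonzero csubspace_zero[OF M_csubspace] by blast
qed

lemma wandering_nonzero: "\<exists>e\<in>wandering. e \<noteq> (\<lambda>_. 0)"
proof (rule ccontr)
  assume none: "\<not> ?thesis"
  have "closed_subspace (S ` M)"
    using closed_subspace_image[OF linear bounded bounded_below M_closed] .
  have "x \<in> S ` M" if x: "x \<in> M" for x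
  proof -
    obtain p where "p \<in> S ` M" "(\<lambda>k. x k - p k) \<in> wandering"
      using orth_diff_decomposition[OF \<open>closed_subspace (S ` M)\<close> M_csubspace M_H2 M_invariant x]
      by blast
    then have "x = p"
      using none by (fastforce simp: fun_eq_iff)
    then show ?thesis
      using \<open>p \<in> S ` M\<close> by simp
  qed
  then show False
    using SM_neq_M M_invariant by blast
qed

lemma S_funpow_sum_wandering_eq_0:
  "(\<And>j. j < J \<Longrightarrow> w j \<in> wandering) \<Longrightarrow> (\<lambda>k. \<Sum>j<J. (S ^^ j) (w j) k) \<in> (S ^^ J) ` M \<Longrightarrow>
    \<forall>j<J. w j = (\<lambda>_. 0)"
proof (induction J arbitrary: w)
  case (Suc J)
  have wM: "w j \<in> M" and wH: "w j \<in> H2" if "j < Suc J" for j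
    using Suc.prems(1)[OF that] M_H2 unfolding orth_diff_def by auto
  obtain y where "y \<in> M" and y: "(\<lambda>k. \<Sum>j<Suc J. (S ^^ j) (w j) k) = S ((S ^^ J) y)"
    using Suc.prems(2) by auto
  define R where "R = (\<lambda>k. \<Sum>j<J. (S ^^ j) (w (Suc j)) k)"
  have "R \<in> M"
    unfolding R_def using csubspace_sum[OF _ M_csubspace, of "{..<J}" _ "\<lambda>_. 1"] S_funpow_M wM
    by simp
  have "(S ^^ J) y \<in> M"
    using S_funpow_M[OF \<open>y \<in> M\<close>] .
  then have H: "R \<in> H2" "(S ^^ J) y \<in> H2"
    using \<open>R \<in> M\<close> M_H2 by auto
  have SR: "S R = (\<lambda>k. \<Sum>j<J. (S ^^ Suc j) (w (Suc j)) k)"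
    unfolding R_def using h2_linear_sum[OF _ linear, of "{..<J}" _ "\<lambda>_. 1"]
      h2_linear_H2[OF h2_linear_funpow[OF linear]] wH
    by simp
  have "(\<lambda>k. \<Sum>j<Suc J. (S ^^ j) (w j) k) = (\<lambda>k. w 0 k + S R k)"
    unfolding sum.lessThan_Suc_shift SR by simp
  then have "(\<lambda>k. w 0 k + S R k) = S ((S ^^ J) y)"
    using y by simp
  then have w0: "w 0 = S (\<lambda>k. (S ^^ J) y k - R k)"
    by (simp add: fun_eq_iff eq_diff_eq h2_linear_diff[OF linear H(2,1)])
  moreover have "(\<lambda>k. (S ^^ J) y k - 1 * R k) \<in> M"
    using M_csubspace \<open>(S ^^ J) y \<in> M\<close> \<open>R \<in> M\<close> by (rule csubspace_diff_scale)
  ultimately have "w 0 \<in> S ` M"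
    by simp
  then have "w 0 = (\<lambda>_. 0)"
    using orth_diff_Int_eq_0 Suc.prems(1) wH by blast
  then have "R = (S ^^ J) y"
    using w0 h2_linear_diff[OF linear H(2,1)] S_inj[OF H] by (simp add: fun_eq_iff)
  then have "\<forall>j<J. w (Suc j) = (\<lambda>_. 0)"
    using Suc.IH[of "\<lambda>j. w (Suc j)"] Suc.prems(1) \<open>y \<in> M\<close> unfolding R_def by blast
  with \<open>w 0 = (\<lambda>_. 0)\<close> show ?case
    by (auto simp: less_Suc_eq_0_disj)
qed simp

lemma closed_subspace_M_zpow_H2: "closed_subspace (M \<inter> zpow_H2 n)"
  using M_closed closed_subspace_zpow_H2 by (rule closed_subspace_Int)

lemma Mz_invariant_M_zpow_H2: "Mz ` (M \<inter> zpow_H2 n) \<subseteq> M \<inter> zpow_H2 n"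
  using shift_on_zpow_H2 M_invariant raises_order zpow_H2_antimono[of n "Suc n"] by force

lemma Mz_funpow_eq_S_funpow: "x \<in> M \<inter> zpow_H2 n \<Longrightarrow> (Mz ^^ K) x = (S ^^ K) x"
proof (induction K)
  case (Suc K)
  then show ?case
    using Mz_funpow_invariant[OF Mz_invariant_M_zpow_H2 Suc.prems, of K] shift_on_zpow_H2 by simp
qed simp

lemma M_zpow_H2_subset_plus_span:
  "\<exists>e. \<forall>K. M \<inter> zpow_H2 n \<subseteq> plus_span ((S ^^ K) ` M) (shift_orbit e K)"
proof -
  obtain e where "e \<in> H2" and e: "\<forall>x\<in>M \<inter> zpow_H2 n. \<exists>a. (\<lambda>k. x k - a * e k) \<in> Mz ` (M \<inter> zpow_H2 n)"
    using shift_invariant_codim_le_one[OF closed_subspace_M_zpow_H2 Mz_invariant_M_zpow_H2] by blast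
  have "M \<inter> zpow_H2 n \<subseteq> plus_span ((S ^^ K) ` M) (shift_orbit e K)" for K
  proof -
    have "M \<inter> zpow_H2 n \<subseteq> plus_span ((Mz ^^ K) ` (M \<inter> zpow_H2 n)) (shift_orbit e K)"
      using shift_invariant_subset_plus_span[OF closed_subspace_M_zpow_H2 Mz_invariant_M_zpow_H2 \<open>e \<in> H2\<close> e] .
    also have "\<dots> \<subseteq> plus_span ((S ^^ K) ` M) (shift_orbit e K)"
      using Mz_funpow_eq_S_funpow by (intro plus_span_mono) auto
    finally show ?thesis .
  qed
  then show ?thesis
    by blast
qed

lemma S_funpow_pairs_independent:
  assumes uv: "u \<in> wandering" "v \<in> wandering" and pair: "h2_orthonormal_pair u v"
    and sum: "(\<lambda>k. \<Sum>p\<in>{m..<K} \<times> UNIV. c p * (S ^^ fst p) (if snd p then v else u) k) \<in> (S ^^ K) ` M"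
  shows "\<forall>p\<in>{m..<K} \<times> UNIV. c p = 0"
proof
  fix p :: "nat \<times> bool"
  assume "p \<in> {m..<K} \<times> UNIV"
  then obtain j b where p: "p = (j, b)" "m \<le> j" "j < K"
    by auto
  have H: "u \<in> H2" "v \<in> H2"
    using uv wandering_H2 by auto
  define w where "w j = (\<lambda>k. if m \<le> j then c (j, False) * u k + c (j, True) * v k else 0)" for j
  have "w j \<in> wandering" for j
    unfolding w_def using csubspace_wandering uv
    by (cases "m \<le> j") (auto intro: csubspace_add csubspace_scale csubspace_zero)
  moreover have "(\<lambda>k. \<Sum>j<K. (S ^^ j) (w j) k) \<in> (S ^^ K) ` M"
    using sum unfolding w_def S_funpow_sum_pairs[OF H] .
  ultimately have "w j = (\<lambda>_. 0)"
    using S_funpow_sum_wandering_eq_0 p(3) by blast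
  then have "(\<lambda>k. c (j, False) * u k + c (j, True) * v k) = (\<lambda>_. 0)"
    unfolding w_def using p(2) by simp
  then have "c (j, False) = 0 \<and> c (j, True) = 0"
    by (rule h2_orthonormal_pair_eq_0[OF pair H])
  then show "c p = 0"
    using p(1) by (cases b) auto
qed

lemma wandering_no_orthonormal_pair:
  assumes uv: "u \<in> wandering" "v \<in> wandering"
  shows "\<not> h2_orthonormal_pair u v"
proof
  assume pair: "h2_orthonormal_pair u v"
  \<comment> \<open>modulo S^K M, the space M \<inter> z^n H2 is spanned by K vectors, yet it contains the 2(K - n) > K
    vectors S^j u, S^j v (n \<le> j < K), which are independent modulo S^K M\<close>
  define K where "K = 2 * n + 1"
  define I where "I = {n..<K} \<times> (UNIV :: bool set)"
  define y where "y p = (S ^^ fst p) (if snd p then v else u)" for p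
  obtain e where span: "M \<inter> zpow_H2 n \<subseteq> plus_span ((S ^^ K) ` M) (shift_orbit e K)"
    using M_zpow_H2_subset_plus_span by blast
  have y_span: "y p \<in> plus_span ((S ^^ K) ` M) (shift_orbit e K)" if "p \<in> I" for p
  proof -
    have "y p \<in> zpow_H2 (0 + fst p)"
      unfolding y_def using uv wandering_H2 by (intro S_funpow_zpow_H2) (auto simp: zpow_H2_0)
    then have "y p \<in> M \<inter> zpow_H2 n"
      using that uv zpow_H2_antimono[of n "fst p"] S_funpow_M
      unfolding I_def y_def orth_diff_def by auto
    then show ?thesis
      using span by blast
  qed
  have "csubspace ((S ^^ K) ` M)"
    using h2_linear_funpow[OF linear] M_csubspace M_H2 by (rule csubspace_h2_linear_image)
  moreover have "finite I" "length (shift_orbit e K) < card I"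
    unfolding I_def K_def by (simp_all add: card_cartesian_product)
  ultimately obtain c where "\<exists>p\<in>I. c p \<noteq> 0" and "(\<lambda>k. \<Sum>p\<in>I. c p * y p k) \<in> (S ^^ K) ` M"
    using plus_span_dependent y_span by blast
  then show False
    using S_funpow_pairs_independent[OF uv pair] unfolding I_def y_def by blast
qed

lemma dim_one_wandering: "dim_one wandering"
proof -
  obtain e where "e \<in> wandering" "e \<noteq> (\<lambda>_. 0)"
    using wandering_nonzero by blast
  then show ?thesis
    using collinear_if_no_orthonormal_pair[OF csubspace_wandering wandering_H2
        wandering_no_orthonormal_pair]
    by (intro dim_oneI[OF csubspace_wandering]) auto
qed

end

section \<open>n-perturbations\<close>

lemma h2_truncation_tendsto:
  assumes "x \<in> H2"
  shows "(\<lambda>N. h2_dist (\<lambda>k. if k < N then x k else 0) x) \<longlonglongrightarrow> 0"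
proof -
  define f where "f k = (cmod (x k))\<^sup>2" for k
  have "summable f"
    using assms unfolding f_def mem_H2_iff .
  have "h2_sqnorm (\<lambda>k. (if k < N then x k else 0) - x k) = suminf f - (\<Sum>k<N. f k)" for N
  proof -
    have "(\<lambda>k. (cmod ((if k < N then x k else 0) - x k))\<^sup>2) = (\<lambda>k. f k - (if k < N then f k else 0))"
      by (auto simp: f_def)
    then have "h2_sqnorm (\<lambda>k. (if k < N then x k else 0) - x k) = (\<Sum>k. f k - (if k < N then f k else 0))"
      unfolding h2_sqnorm_def by simp
    also have "\<dots> = suminf f - (\<Sum>k. if k < N then f k else 0)"
      using \<open>summable f\<close> summable_finite[of "{..<N}" "\<lambda>k. if k < N then f k else 0"]
      by (intro suminf_diff[symmetric]) auto
    also have "(\<Sum>k. if k < N then f k else 0) = (\<Sum>k<N. f k)"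
      by (subst suminf_finite[of "{..<N}"]) auto
    finally show ?thesis .
  qed
  moreover have "(\<lambda>N. suminf f - (\<Sum>k<N. f k)) \<longlonglongrightarrow> suminf f - suminf f"
    using \<open>summable f\<close> by (intro tendsto_diff tendsto_const summable_LIMSEQ)
  ultimately have "(\<lambda>N. sqrt (h2_sqnorm (\<lambda>k. (if k < N then x k else 0) - x k))) \<longlonglongrightarrow> sqrt 0"
    by (intro tendsto_real_sqrt) simp
  then show ?thesis
    by (simp add: h2_norm_eq_sqrt)
qed

lemma bounded_op_vanishes_on_zpow_H2:
  assumes F: "bounded_op F" and zpow: "\<forall>m\<ge>n. F (zpow m) = (\<lambda>_. 0)" and x: "x \<in> zpow_H2 n"
  shows "F x = (\<lambda>_. 0)"
proof -
  \<comment> \<open>F kills every truncation of x, and the truncations converge to x\<close>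
  have lin: "h2_linear F"
    using F by (rule bounded_op_h2_linear)
  obtain C where C: "\<forall>x\<in>H2. h2_norm (F x) \<le> C * h2_norm x"
    using bounded_op_bound[OF F] by blast
  define tr where "tr N = (\<lambda>k. if k < N then x k else 0)" for N
  have "x \<in> H2"
    using x by (simp add: zpow_H2_def)
  have tr_H2: "tr N \<in> H2" for N
    unfolding tr_def by (rule H2_finite_support[of N]) auto
  have F_tr: "F (tr N) = (\<lambda>_. 0)" for N
  proof (induction N)
    case (Suc N)
    have "tr (Suc N) = (\<lambda>k. tr N k + x N * zpow N k)"
      unfolding tr_def zpow_def by (auto simp: fun_eq_iff less_Suc_eq)
    moreover have "(\<lambda>k. x N * F (zpow N) k) = (\<lambda>_. 0)"
      using zpow x by (cases "n \<le> N") (auto simp: zpow_H2_def)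
    ultimately show ?case
      using Suc h2_linear_add[OF lin tr_H2 H2_scale[OF zpow_in_H2]] h2_linear_scale[OF lin zpow_in_H2]
      by simp
  qed (simp add: tr_def h2_linear_zero[OF lin])
  have "(\<lambda>N. h2_dist (F (tr N)) (F x)) \<longlonglongrightarrow> 0"
    using h2_linear_bounded_tendsto[where s = tr, OF lin C tr_H2 \<open>x \<in> H2\<close>]
      h2_truncation_tendsto[OF \<open>x \<in> H2\<close>]
    unfolding tr_def by blast
  then show ?thesis
    using h2_limit_unique[of "\<lambda>_. \<lambda>_. 0" "F x" "\<lambda>_. 0"] h2_linear_H2[OF lin \<open>x \<in> H2\<close>] H2_zero
    by (simp add: F_tr h2_norm_def)
qed

lemma n_perturbation_perturbed_shift:
  assumes "n_perturbation n F"
  obtains C D where "perturbed_shift (\<lambda>x k. Mz x k + F x k) n C D"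
proof -
  define S where "S = (\<lambda>x k. Mz x k + F x k)"
  have F: "bounded_op F" and F_zpow: "\<forall>m\<ge>n. F (zpow m) = (\<lambda>_. 0)"
    and F_order: "\<forall>m. F ` zpow_H2 m \<subseteq> zpow_poly (m + 1)" and "left_invertible S"
    using assms unfolding n_perturbation_def S_def by auto
  have lin: "h2_linear F"
    using F by (rule bounded_op_h2_linear)
  obtain CF where CF: "\<forall>x\<in>H2. h2_norm (F x) \<le> CF * h2_norm x"
    using bounded_op_bound[OF F] by blast
  have S_H2: "S x \<in> H2" if "x \<in> H2" for x
    unfolding S_def using that by (intro H2_add Mz_H2 h2_linear_H2[OF lin])
  have "h2_linear S"
    using S_H2 h2_linear_add[OF lin] h2_linear_scale[OF lin]
      h2_linear_add[OF h2_linear_Mz] h2_linear_scale[OF h2_linear_Mz]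
    unfolding h2_linear_def S_def by (auto simp: fun_eq_iff algebra_simps)
  moreover have "\<forall>x\<in>H2. h2_norm (S x) \<le> (1 + CF) * h2_norm x"
    using h2_norm_triangle[OF Mz_H2 h2_linear_H2[OF lin]] h2_norm_Mz CF
    unfolding S_def by (fastforce simp: algebra_simps)
  moreover obtain L CL where "\<forall>x\<in>H2. L (S x) = x" "\<forall>x\<in>H2. h2_norm (L x) \<le> CL * h2_norm x"
    using \<open>left_invertible S\<close> bounded_op_bound unfolding left_invertible_def by metis
  then have "\<forall>x\<in>H2. h2_norm x \<le> CL * h2_norm (S x)"
    using S_H2 by metis
  moreover have "S x \<in> zpow_H2 (Suc k)" if "x \<in> zpow_H2 k" for k x
  proof -
    have "F x \<in> zpow_poly (Suc k)"
      using F_order that by auto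
    then show ?thesis
      using that S_H2 unfolding zpow_H2_def zpow_poly_def S_def
      by (auto simp: Mz_def less_Suc_eq_0_disj)
  qed
  moreover have "S x = Mz x" if "x \<in> zpow_H2 n" for x
    unfolding S_def using bounded_op_vanishes_on_zpow_H2[OF F F_zpow that] by simp
  ultimately have "perturbed_shift S n (1 + CF) CL"
    by (rule perturbed_shift.intro)
  then show ?thesis
    unfolding S_def by (rule that)
qed

theorem theorem3p1:
  fixes n :: nat and F :: "(nat \<Rightarrow> complex) \<Rightarrow> nat \<Rightarrow> complex"
    and M :: "(nat \<Rightarrow> complex) set"
  assumes "n \<ge> 1"
    and "n_perturbation n F"
    and "closed_subspace M"
    and "M \<noteq> {\<lambda>_. 0}"
    and "(\<lambda>x. (\<lambda>k. Mz x k + F x k)) ` M \<subseteq> M"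
  shows "dim_one (orth_diff M ((\<lambda>x. (\<lambda>k. Mz x k + F x k)) ` M))"
proof -
  obtain C D where "perturbed_shift (\<lambda>x k. Mz x k + F x k) n C D"
    using n_perturbation_perturbed_shift[OF assms(2)] .
  then interpret perturbed_shift_invariant_subspace "\<lambda>x k. Mz x k + F x k" n C D M
    using assms(3-5) by (simp add: perturbed_shift_invariant_subspace_def
        perturbed_shift_invariant_subspace_axioms_def)
  show ?thesis
    by (rule dim_one_wandering)
qed

end
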